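(* The family $\mathcal{T}_{\mathcal{M}3}$ of all finite trees having at least two vertices and all of whose vertices have order at most $3$, together with all monotone epimorphisms between them, has the joint projection property and the projective amalgamation property. That is: (JPP) for any $B,C\in\mathcal{T}_{\mathcal{M}3}$ there are $D\in\mathcal{T}_{\mathcal{M}3}$ and monotone epimorphisms $D\to B$, $D\to C$; (AP) for any $A,B,C\in\mathcal{T}_{\mathcal{M}3}$ and monotone epimorphisms $f\colon B\to A$, $g\colon C\to A$ there are $D\in\mathcal{T}_{\mathcal{M}3}$ and monotone epimorphisms $f_0\colon D\to B$, $g_0\colon D\to C$ with $f\circ f_0=g\circ g_0$.
   Context: A graph is a pair $A=(V(A),E(A))$ with $E(A)\subseteq V(A)^2$ reflexive and symmetric; edges $\langle a,a\rangle$ are called degenerate. A homomorphism $f\colon A\to B$ is a map $V(A)\to V(B)$ sending edges to edges; an epimorphism is a homomorphism that is surjective on vertices and on edges (every edge of $B$ is the image of an edge of $A$). A tree is a finite graph $T$ such that any two distinct vertices $a,b$ are joined by a unique sequence $a=v_0,\dots,v_n=b$ of pairwise distinct vertices with $\langle v_i,v_{i+1}\rangle\in E(T)$. The order of a vertex is the number of non-degenerate edges containing it. A set $S\subseteq V(G)$ is disconnected if $S=P\cup Q$ with $P,Q$ nonempty, disjoint, closed, and no edge $\langle a,b\rangle\in E(G)$ with $a\in P$, $b\in Q$; otherwise $S$ is connected. An epimorphism $f\colon G\to H$ is monotone if the preimage of every (closed) connected subset of $V(H)$ is connected. *)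

theory Defs
  imports Main
begin

type_synonym 'a graph = "'a set \<times> ('a \<times> 'a) set"

definition verts :: "'a graph \<Rightarrow> 'a set" where "verts G = fst G"
definition edges :: "'a graph \<Rightarrow> ('a \<times> 'a) set" where "edges G = snd G"

definition is_graph :: "'a graph \<Rightarrow> bool" where
  "is_graph G \<longleftrightarrow> edges G \<subseteq> verts G \<times> verts G
     \<and> (\<forall>a\<in>verts G. (a, a) \<in> edges G)
     \<and> (\<forall>a b. (a, b) \<in> edges G \<longrightarrow> (b, a) \<in> edges G)"

definition graph_hom :: "('a \<Rightarrow> 'b) \<Rightarrow> 'a graph \<Rightarrow> 'b graph \<Rightarrow> bool" where
  "graph_hom f A B \<longleftrightarrow> f ` verts A \<subseteq> verts B
     \<and> (\<forall>(a, b)\<in>edges A. (f a, f b) \<in> edges B)"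

definition graph_epi :: "('a \<Rightarrow> 'b) \<Rightarrow> 'a graph \<Rightarrow> 'b graph \<Rightarrow> bool" where
  "graph_epi f A B \<longleftrightarrow> graph_hom f A B \<and> f ` verts A = verts B
     \<and> (\<lambda>(a, b). (f a, f b)) ` edges A = edges B"

definition is_path :: "'a graph \<Rightarrow> 'a \<Rightarrow> 'a \<Rightarrow> 'a list \<Rightarrow> bool" where
  "is_path G a b vs \<longleftrightarrow> vs \<noteq> [] \<and> hd vs = a \<and> last vs = b \<and> distinct vs
     \<and> set vs \<subseteq> verts G
     \<and> (\<forall>i. Suc i < length vs \<longrightarrow> (vs ! i, vs ! Suc i) \<in> edges G)"

definition is_tree :: "'a graph \<Rightarrow> bool" where
  "is_tree T \<longleftrightarrow> is_graph T \<and> finite (verts T)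
     \<and> (\<forall>a\<in>verts T. \<forall>b\<in>verts T. a \<noteq> b \<longrightarrow> (\<exists>!vs. is_path T a b vs))"

definition vorder :: "'a graph \<Rightarrow> 'a \<Rightarrow> nat" where
  "vorder G a = card {b. (a, b) \<in> edges G \<and> b \<noteq> a}"

text \<open>Connectedness of a vertex set (finite graphs: all sets are closed).\<close>
definition set_connected :: "'a graph \<Rightarrow> 'a set \<Rightarrow> bool" where
  "set_connected G S \<longleftrightarrow> \<not> (\<exists>P Q. P \<noteq> {} \<and> Q \<noteq> {} \<and> P \<inter> Q = {} \<and> S = P \<union> Q
      \<and> \<not> (\<exists>a\<in>P. \<exists>b\<in>Q. (a, b) \<in> edges G))"

definition monotone_epi :: "('a \<Rightarrow> 'b) \<Rightarrow> 'a graph \<Rightarrow> 'b graph \<Rightarrow> bool" where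
  "monotone_epi f G H \<longleftrightarrow> graph_epi f G H
     \<and> (\<forall>S\<subseteq>verts H. set_connected H S \<longrightarrow> set_connected G (f -` S \<inter> verts G))"

definition in_TM3 :: "'a graph \<Rightarrow> bool" where
  "in_TM3 T \<longleftrightarrow> is_tree T \<and> card (verts T) \<ge> 2 \<and> (\<forall>a\<in>verts T. vorder T a \<le> 3)"

end

theory Submission
  imports Defs
begin

lemma verts_pair [simp]: "verts (V, E) = V"
  and edges_pair [simp]: "edges (V, E) = E"
  by (simp_all add: verts_def edges_def)

lemma graph_edge_sym: "is_graph G \<Longrightarrow> (a, b) \<in> edges G \<Longrightarrow> (b, a) \<in> edges G"
  by (simp add: is_graph_def)

lemma graph_edge_refl: "is_graph G \<Longrightarrow> a \<in> verts G \<Longrightarrow> (a, a) \<in> edges G"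
  by (simp add: is_graph_def)

lemma graph_edgeD1: "is_graph G \<Longrightarrow> (a, b) \<in> edges G \<Longrightarrow> a \<in> verts G"
  and graph_edgeD2: "is_graph G \<Longrightarrow> (a, b) \<in> edges G \<Longrightarrow> b \<in> verts G"
  by (auto simp: is_graph_def)

definition neighbours :: "'a graph \<Rightarrow> 'a \<Rightarrow> 'a set" where
  "neighbours G a = {b. (a, b) \<in> edges G \<and> b \<noteq> a}"

lemma vorder_neighbours: "vorder G a = card (neighbours G a)"
  by (simp add: vorder_def neighbours_def)

lemma finite_neighbours: "is_graph G \<Longrightarrow> finite (verts G) \<Longrightarrow> finite (neighbours G a)"
  by (rule finite_subset[of _ "verts G"]) (auto simp: neighbours_def dest: graph_edgeD2)

section \<open>Paths\<close>

lemma is_path_iff: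
  "is_path G a b vs \<longleftrightarrow> vs \<noteq> [] \<and> hd vs = a \<and> last vs = b \<and> distinct vs \<and> set vs \<subseteq> verts G
     \<and> successively (\<lambda>x y. (x, y) \<in> edges G) vs"
  by (simp add: is_path_def successively_conv_nth)

lemma is_path_same_ends:
  assumes "is_path G a a vs" shows "vs = [a]"
proof (cases vs)
  case (Cons x ys)
  have "ys = []"
  proof (rule ccontr)
    assume "ys \<noteq> []"
    then have "last ys \<in> set ys" "last ys = x" using assms Cons by (auto simp: is_path_iff)
    then show False using assms Cons by (auto simp: is_path_iff)
  qed
  then show ?thesis using assms Cons by (simp add: is_path_iff)
qed (use assms in \<open>simp add: is_path_iff\<close>)

lemma is_path_singleton: "a \<in> verts G \<Longrightarrow> is_path G a a [a]"
  by (simp add: is_path_iff)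

lemma is_path_edge:
  "(a, b) \<in> edges G \<Longrightarrow> a \<noteq> b \<Longrightarrow> a \<in> verts G \<Longrightarrow> b \<in> verts G \<Longrightarrow> is_path G a b [a, b]"
  by (simp add: is_path_iff)

lemma is_path_append:
  assumes "is_path G a b xs" "is_path G c d ys" "(b, c) \<in> edges G" "set xs \<inter> set ys = {}"
  shows "is_path G a d (xs @ ys)"
  using assms by (auto simp: is_path_iff successively_append_iff)

lemma is_path_snoc:
  "is_path G a b xs \<Longrightarrow> (b, c) \<in> edges G \<Longrightarrow> c \<notin> set xs \<Longrightarrow> c \<in> verts G \<Longrightarrow> is_path G a c (xs @ [c])"
  by (auto simp: is_path_iff successively_append_iff)

lemma is_path_rev: "is_graph G \<Longrightarrow> is_path G a b vs \<Longrightarrow> is_path G b a (rev vs)"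
  by (auto simp: is_path_iff hd_rev last_rev elim!: successively_mono intro: graph_edge_sym)

lemma is_path_split:
  assumes "is_path G a b (xs @ y # ys)"
  shows "is_path G a y (xs @ [y])" "is_path G y b (y # ys)"
  using assms by (auto simp: is_path_iff successively_append_iff hd_append)

lemma is_path_restrict:
  assumes "is_path G a b vs" "set vs \<subseteq> W" "W \<subseteq> verts H"
    "\<And>u w. u \<in> W \<Longrightarrow> w \<in> W \<Longrightarrow> (u, w) \<in> edges G \<Longrightarrow> (u, w) \<in> edges H"
  shows "is_path H a b vs"
proof -
  have "successively (\<lambda>x y. (x, y) \<in> edges H) vs"
    using assms(1) by (auto simp: is_path_iff elim!: successively_mono intro: assms(4) assms(2)[THEN subsetD])
  then show ?thesis using assms(1-3) by (auto simp: is_path_iff)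
qed

lemma is_path_mono:
  "is_path G a b vs \<Longrightarrow> verts G \<subseteq> verts H \<Longrightarrow> edges G \<subseteq> edges H \<Longrightarrow> is_path H a b vs"
  by (auto simp: is_path_iff elim!: successively_mono)

lemma pendant_not_inner_vertex:
  assumes g: "is_graph G" and p: "is_path G a b vs" and y: "y \<in> set vs" "y \<noteq> a" "y \<noteq> b"
    and pendant: "neighbours G y \<subseteq> {x}"
  shows False
proof -
  obtain xs ys where vs: "vs = xs @ y # ys" using split_list[OF y(1)] by blast
  then have ne: "xs \<noteq> []" "ys \<noteq> []" using p y(2,3) by (auto simp: is_path_iff)
  have "distinct vs" "successively (\<lambda>x y. (x, y) \<in> edges G) vs" using p by (simp_all add: is_path_iff)
  then have "set xs \<inter> set ys = {}" "(last xs, y) \<in> edges G" "(y, hd ys) \<in> edges G"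
    using vs ne by (auto simp: successively_append_iff successively_Cons)
  then have "last xs \<in> neighbours G y" "hd ys \<in> neighbours G y" "last xs \<noteq> hd ys"
    using vs \<open>distinct vs\<close> graph_edge_sym[OF g] last_in_set[OF ne(1)] hd_in_set[OF ne(2)]
    by (auto simp: neighbours_def)
  then show False using pendant by blast
qed

lemma is_treeI:
  assumes "is_graph T" "finite (verts T)"
    "\<And>a b. a \<in> verts T \<Longrightarrow> b \<in> verts T \<Longrightarrow> a \<noteq> b \<Longrightarrow> \<exists>vs. is_path T a b vs"
    "\<And>a b vs ws. a \<noteq> b \<Longrightarrow> is_path T a b vs \<Longrightarrow> is_path T a b ws \<Longrightarrow> vs = ws"
  shows "is_tree T"
  unfolding is_tree_def using assms by blast

lemma is_tree_graph: "is_tree T \<Longrightarrow> is_graph T"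
  and is_tree_finite: "is_tree T \<Longrightarrow> finite (verts T)"
  by (simp_all add: is_tree_def)

lemma tree_path_exists:
  "is_tree T \<Longrightarrow> a \<in> verts T \<Longrightarrow> b \<in> verts T \<Longrightarrow> a \<noteq> b \<Longrightarrow> \<exists>vs. is_path T a b vs"
  unfolding is_tree_def by blast

lemma tree_path_unique:
  "is_tree T \<Longrightarrow> a \<noteq> b \<Longrightarrow> is_path T a b vs \<Longrightarrow> is_path T a b ws \<Longrightarrow> vs = ws"
  unfolding is_tree_def is_path_def by (metis hd_in_set last_in_set subsetD)

lemma tree_no_triangle:
  assumes "is_tree T" "(u, v) \<in> edges T" "(v, w) \<in> edges T" "(u, w) \<in> edges T"
    "u \<noteq> v" "v \<noteq> w" "u \<noteq> w"
  shows False
proof -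
  have g: "is_graph T" using assms(1) by (rule is_tree_graph)
  have "is_path T u w [u, w]" "is_path T u w [u, v, w]"
    using assms graph_edgeD1[OF g] graph_edgeD2[OF g] by (auto simp: is_path_iff)
  then show False using tree_path_unique[OF assms(1) assms(7)] by fastforce
qed

section \<open>Connected vertex sets\<close>

lemma set_connected_iff_crossing:
  "set_connected G S \<longleftrightarrow> (\<forall>P \<subseteq> S. P \<noteq> {} \<longrightarrow> S - P \<noteq> {} \<longrightarrow> (\<exists>a\<in>P. \<exists>b\<in>S - P. (a, b) \<in> edges G))"
proof
  assume conn: "set_connected G S"
  show "\<forall>P \<subseteq> S. P \<noteq> {} \<longrightarrow> S - P \<noteq> {} \<longrightarrow> (\<exists>a\<in>P. \<exists>b\<in>S - P. (a, b) \<in> edges G)"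
  proof (intro allI impI)
    fix P assume P: "P \<subseteq> S" "P \<noteq> {}" "S - P \<noteq> {}"
    show "\<exists>a\<in>P. \<exists>b\<in>S - P. (a, b) \<in> edges G"
    proof (rule ccontr)
      assume "\<not> (\<exists>a\<in>P. \<exists>b\<in>S - P. (a, b) \<in> edges G)"
      then have "\<exists>P' Q. P' \<noteq> {} \<and> Q \<noteq> {} \<and> P' \<inter> Q = {} \<and> S = P' \<union> Q
          \<and> \<not> (\<exists>a\<in>P'. \<exists>b\<in>Q. (a, b) \<in> edges G)"
        using P by (intro exI[of _ P] exI[of _ "S - P"]) auto
      then show False using conn unfolding set_connected_def by simp
    qed
  qed
next
  assume cross: "\<forall>P \<subseteq> S. P \<noteq> {} \<longrightarrow> S - P \<noteq> {} \<longrightarrow> (\<exists>a\<in>P. \<exists>b\<in>S - P. (a, b) \<in> edges G)"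
  show "set_connected G S"
    unfolding set_connected_def
  proof clarify
    fix P Q assume PQ: "P \<noteq> {}" "Q \<noteq> {}" "P \<inter> Q = {}" "S = P \<union> Q"
      "\<not> (\<exists>a\<in>P. \<exists>b\<in>Q. (a, b) \<in> edges G)"
    then have "P \<subseteq> S" "S - P = Q" by auto
    then have "\<exists>a\<in>P. \<exists>b\<in>S - P. (a, b) \<in> edges G" using cross PQ(1,2) by blast
    then have "\<exists>a\<in>P. \<exists>b\<in>Q. (a, b) \<in> edges G" using \<open>S - P = Q\<close> by simp
    then show False using PQ(5) by simp
  qed
qed

lemma set_connected_crossing:
  "set_connected G S \<Longrightarrow> P \<subseteq> S \<Longrightarrow> P \<noteq> {} \<Longrightarrow> S - P \<noteq> {} \<Longrightarrow> \<exists>a\<in>P. \<exists>b\<in>S - P. (a, b) \<in> edges G"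
  unfolding set_connected_iff_crossing by blast

lemma set_connected_singleton: "set_connected G {a}"
  by (auto simp: set_connected_iff_crossing)

lemma set_connected_edge:
  assumes "(a, b) \<in> edges G" "(b, a) \<in> edges G"
  shows "set_connected G {a, b}"
  unfolding set_connected_iff_crossing
proof (intro allI impI)
  fix P assume P: "P \<subseteq> {a, b}" "P \<noteq> {}" "{a, b} - P \<noteq> {}"
  show "\<exists>c\<in>P. \<exists>d\<in>{a, b} - P. (c, d) \<in> edges G"
  proof (cases "a \<in> P")
    case True
    then have "b \<notin> P" using P(3) by auto
    then show ?thesis using True assms(1) by auto
  next
    case False
    then have "b \<in> P" using P(1,2) by auto
    then show ?thesis using False assms(2) by auto
  qed
qed

lemma set_connected_split:
  assumes S: "set_connected G S" and PQ: "S \<subseteq> P \<union> Q" "\<forall>a\<in>P. \<forall>b\<in>Q. (a, b) \<notin> edges G"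
  shows "S \<subseteq> P \<or> S \<subseteq> Q"
proof (rule ccontr)
  assume "\<not> (S \<subseteq> P \<or> S \<subseteq> Q)"
  then have "S \<inter> P \<noteq> {}" "S - S \<inter> P \<noteq> {}" using PQ(1) by auto
  then obtain a b where ab: "a \<in> S \<inter> P" "b \<in> S - S \<inter> P" "(a, b) \<in> edges G"
    using set_connected_crossing[OF S, of "S \<inter> P"] by blast
  then have "b \<in> Q" using PQ(1) by auto
  then show False using PQ(2) ab(1,3) by auto
qed

lemma set_connected_mono_edges:
  assumes S: "set_connected G S"
    and E: "\<And>a b. a \<in> S \<Longrightarrow> b \<in> S \<Longrightarrow> (a, b) \<in> edges G \<Longrightarrow> (a, b) \<in> edges H"
  shows "set_connected H S"
  unfolding set_connected_iff_crossing
proof (intro allI impI)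
  fix P assume P: "P \<subseteq> S" "P \<noteq> {}" "S - P \<noteq> {}"
  then obtain a b where "a \<in> P" "b \<in> S - P" "(a, b) \<in> edges G" using set_connected_crossing[OF S] by blast
  then show "\<exists>a\<in>P. \<exists>b\<in>S - P. (a, b) \<in> edges H" using E P(1) by blast
qed

lemma set_connected_image:
  assumes S: "set_connected G S"
    and r: "\<And>a b. a \<in> S \<Longrightarrow> b \<in> S \<Longrightarrow> (a, b) \<in> edges G \<Longrightarrow> (r a, r b) \<in> edges H"
  shows "set_connected H (r ` S)"
  unfolding set_connected_iff_crossing
proof (intro allI impI)
  fix P assume P: "P \<subseteq> r ` S" "P \<noteq> {}" "r ` S - P \<noteq> {}"
  then have "S \<inter> r -` P \<noteq> {}" "S - S \<inter> r -` P \<noteq> {}" by auto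
  then obtain a b where "a \<in> S \<inter> r -` P" "b \<in> S - S \<inter> r -` P" "(a, b) \<in> edges G"
    using set_connected_crossing[OF S, of "S \<inter> r -` P"] by blast
  then show "\<exists>c\<in>P. \<exists>d\<in>r ` S - P. (c, d) \<in> edges H" using r by blast
qed

lemma set_connected_neighbour:
  assumes "set_connected G S" "a \<in> S" "b \<in> S" "a \<noteq> b"
  shows "\<exists>c\<in>S. c \<noteq> a \<and> (a, c) \<in> edges G"
proof -
  have "S - {a} \<noteq> {}" using assms(3,4) by blast
  then show ?thesis using set_connected_crossing[OF assms(1), of "{a}"] assms(2) by auto
qed

lemma set_connected_path:
  assumes S: "set_connected G S" "S \<subseteq> verts G" and ab: "a \<in> S" "b \<in> S"
  shows "\<exists>vs. is_path G a b vs \<and> set vs \<subseteq> S"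
proof (rule ccontr)
  assume no_path: "\<not> ?thesis"
  define R where "R = {x \<in> S. \<exists>vs. is_path G a x vs \<and> set vs \<subseteq> S}"
  have "is_path G a a [a]" using ab(1) S(2) by (auto intro: is_path_singleton)
  then have "a \<in> R" using ab(1) unfolding R_def by force
  moreover have "b \<in> S - R" using no_path ab(2) by (auto simp: R_def)
  moreover have "R \<subseteq> S" by (auto simp: R_def)
  ultimately obtain x y where xy: "x \<in> R" "y \<in> S - R" "(x, y) \<in> edges G"
    using set_connected_crossing[OF S(1), of R] by blast
  then obtain vs where vs: "is_path G a x vs" "set vs \<subseteq> S" by (auto simp: R_def)
  have "\<exists>ws. is_path G a y ws \<and> set ws \<subseteq> S"
  proof (cases "y \<in> set vs")
    case True
    then obtain xs ys where "vs = xs @ y # ys" using split_list by metis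
    then have "is_path G a y (xs @ [y])" "set (xs @ [y]) \<subseteq> S"
      using is_path_split(1)[of G a x xs y ys] vs by auto
    then show ?thesis by blast
  next
    case False
    then have "is_path G a y (vs @ [y])" "set (vs @ [y]) \<subseteq> S"
      using is_path_snoc[OF vs(1) xy(3)] vs(2) xy(2) S(2) by auto
    then show ?thesis by blast
  qed
  then show False using xy(2) by (auto simp: R_def)
qed

lemma set_connected_tree_verts:
  assumes tree: "is_tree T" shows "set_connected T (verts T)"
  unfolding set_connected_iff_crossing
proof (intro allI impI)
  fix P assume P: "P \<subseteq> verts T" "P \<noteq> {}" "verts T - P \<noteq> {}"
  then obtain p q where pq: "p \<in> P" "q \<in> verts T - P" by blast
  then obtain vs where vs: "is_path T p q vs" using tree_path_exists[OF tree] P(1) by blast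
  then have "successively (\<lambda>x y. (x, y) \<in> edges T) vs" "set vs \<subseteq> verts T" "hd vs \<in> P" "last vs \<notin> P"
    "vs \<noteq> []" using pq by (auto simp: is_path_iff)
  then show "\<exists>a\<in>P. \<exists>b\<in>verts T - P. (a, b) \<in> edges T"
  proof (induction vs rule: induct_list012)
    case (3 x y zs)
    then show ?case by (cases "y \<in> P") auto
  qed auto
qed

lemma tree_unique_edge_between:
  assumes tree: "is_tree T" and F: "F \<subseteq> verts T" "set_connected T F"
    and G: "G \<subseteq> verts T" "set_connected T G" and disj: "F \<inter> G = {}"
    and ends: "s1 \<in> F" "s2 \<in> F" "t1 \<in> G" "t2 \<in> G"
    and e: "(s1, t1) \<in> edges T" "(s2, t2) \<in> edges T"
  shows "s1 = s2 \<and> t1 = t2"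
proof -
  obtain ps where ps: "is_path T s1 s2 ps" "set ps \<subseteq> F" using set_connected_path[OF F(2,1) ends(1,2)] by blast
  obtain qs where qs: "is_path T t2 t1 qs" "set qs \<subseteq> G" using set_connected_path[OF G(2,1) ends(4,3)] by blast
  have "is_path T s1 t1 (ps @ qs)" using is_path_append[OF ps(1) qs(1) e(2)] ps(2) qs(2) disj by blast
  moreover have "is_path T s1 t1 [s1, t1]" using is_path_edge[OF e(1)] ends F(1) G(1) disj by blast
  moreover have "s1 \<noteq> t1" using ends(1,3) disj by blast
  ultimately have "ps @ qs = [s1, t1]" using tree_path_unique[OF tree] by blast
  moreover have "ps \<noteq> []" "qs \<noteq> []" using ps(1) qs(1) by (simp_all add: is_path_iff)
  ultimately have "ps = [s1]" "qs = [t1]" by (auto simp: Cons_eq_append_conv append_eq_Cons_conv)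
  then show ?thesis using ps(1) qs(1) by (simp add: is_path_iff)
qed

section \<open>Longest paths and pendant vertices\<close>

lemma longest_path_end_pendant:
  assumes tree: "is_tree T" and p: "is_path T a b vs" "set vs \<subseteq> S" "2 \<le> length vs"
    and longest: "\<And>a' b' ws. is_path T a' b' ws \<Longrightarrow> set ws \<subseteq> S \<Longrightarrow> length ws \<le> length vs"
  shows "\<exists>v. neighbours T b \<inter> S = {v}"
proof -
  have g: "is_graph T" using tree by (rule is_tree_graph)
  have ends_with: "\<exists>xs. vs = xs @ [z, b]" if z: "z \<in> S" "z \<in> neighbours T b" for z
  proof -
    have zb: "(b, z) \<in> edges T" "z \<noteq> b" "z \<in> verts T"
      using z graph_edgeD2[OF g] by (auto simp: neighbours_def)
    show ?thesis
    proof (cases "z \<in> set vs")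
      case False
      then have "is_path T a z (vs @ [z])" using is_path_snoc[OF p(1) zb(1)] zb(3) by blast
      then show ?thesis using longest[of a z "vs @ [z]"] p(2) z(1) by simp
    next
      case True
      then obtain xs ys where vs: "vs = xs @ z # ys" by (metis split_list)
      have "is_path T z b (z # ys)" using is_path_split(2)[of T a b xs z ys] p(1) vs by simp
      moreover have "is_path T z b [z, b]"
        using is_path_edge[OF graph_edge_sym[OF g zb(1)]] zb graph_edgeD1[OF g zb(1)] by blast
      ultimately have "ys = [b]" using tree_path_unique[OF tree zb(2)] by blast
      then show ?thesis using vs by simp
    qed
  qed
  obtain ys w where "vs = ys @ [w]" using p(3) by (cases vs rule: rev_cases) auto
  moreover obtain xs v where "ys = xs @ [v]" using p(3) calculation by (cases ys rule: rev_cases) auto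
  moreover have "last vs = b" using p(1) by (simp add: is_path_iff)
  ultimately have vs: "vs = xs @ [v, b]" by simp
  then have "v \<in> S" "v \<in> neighbours T b"
    using p(1,2) graph_edge_sym[OF g] by (auto simp: is_path_iff successively_append_iff neighbours_def)
  moreover have "z = v" if "z \<in> S" "z \<in> neighbours T b" for z
    using ends_with[OF that] vs by auto
  ultimately show ?thesis by blast
qed

lemma longest_path_exists:
  assumes fin: "finite S" and p0: "is_path G a0 b0 vs0" "set vs0 \<subseteq> S"
  shows "\<exists>a b vs. is_path G a b vs \<and> set vs \<subseteq> S \<and> length vs0 \<le> length vs
    \<and> (\<forall>a' b' ws. is_path G a' b' ws \<and> set ws \<subseteq> S \<longrightarrow> length ws \<le> length vs)"
proof -
  define PS where "PS = {vs. (\<exists>a b. is_path G a b vs) \<and> set vs \<subseteq> S}"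
  have "length vs \<le> card S" if "vs \<in> PS" for vs
  proof -
    have "distinct vs" "set vs \<subseteq> S" using that by (auto simp: PS_def is_path_iff)
    then have "length vs = card (set vs)" using distinct_card[of vs] by simp
    also have "\<dots> \<le> card S" using card_mono[OF fin \<open>set vs \<subseteq> S\<close>] .
    finally show ?thesis .
  qed
  then have "PS \<subseteq> {vs. set vs \<subseteq> S \<and> length vs \<le> card S}" by (auto simp: PS_def)
  then have fin_PS: "finite PS" using finite_lists_length_le[OF fin] finite_subset by blast
  have vs0: "vs0 \<in> PS" using p0 by (auto simp: PS_def)
  define L where "L = Max (length ` PS)"
  have L: "length ws \<le> L" if "ws \<in> PS" for ws
    using Max_ge[OF finite_imageI[OF fin_PS]] that unfolding L_def by blast
  have "L \<in> length ` PS" unfolding L_def using fin_PS vs0 by (intro Max_in) auto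
  then obtain vs where vs: "vs \<in> PS" "length vs = L" by blast
  then obtain a b where "is_path G a b vs" "set vs \<subseteq> S" unfolding PS_def by blast
  moreover have "\<forall>a' b' ws. is_path G a' b' ws \<and> set ws \<subseteq> S \<longrightarrow> length ws \<le> length vs"
    using L vs(2) unfolding PS_def by blast
  ultimately show ?thesis using L[OF vs0] vs(2) by blast
qed

lemma connected_set_two_ends:
  assumes tree: "is_tree T" and S: "S \<subseteq> verts T" "set_connected T S"
    and xy: "x \<in> S" "y \<in> S" "x \<noteq> y"
  shows "\<exists>w1 v1 w2 v2. w1 \<noteq> w2 \<and> w1 \<in> S \<and> w2 \<in> S
    \<and> neighbours T w1 \<inter> S = {v1} \<and> neighbours T w2 \<inter> S = {v2}"
proof -
  have g: "is_graph T" using tree by (rule is_tree_graph)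
  have fin: "finite S" using finite_subset[OF S(1) is_tree_finite[OF tree]] .
  obtain c where c: "c \<in> S" "c \<noteq> x" "(x, c) \<in> edges T" using set_connected_neighbour[OF S(2) xy] by blast
  then have "is_path T x c [x, c]" "set [x, c] \<subseteq> S" using is_path_edge[OF c(3)] xy(1) S(1) by auto
  then obtain a b vs where p: "is_path T a b vs" "set vs \<subseteq> S" and len0: "length [x, c] \<le> length vs"
    and longest0: "\<forall>a' b' ws. is_path T a' b' ws \<and> set ws \<subseteq> S \<longrightarrow> length ws \<le> length vs"
    using longest_path_exists[OF fin] by blast
  have len: "2 \<le> length vs" using len0 by simp
  have longest: "length ws \<le> length vs" if "is_path T a' b' ws" "set ws \<subseteq> S" for a' b' ws
    using longest0 that by blast
  have "a \<noteq> b"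
  proof
    assume "a = b"
    then show False using is_path_same_ends[of T a vs] p(1) len by simp
  qed
  moreover have "a \<in> S" "b \<in> S" using p by (auto simp: is_path_iff dest: hd_in_set last_in_set)
  moreover obtain v1 where "neighbours T b \<inter> S = {v1}"
    using longest_path_end_pendant[OF tree p len] longest by blast
  moreover obtain v2 where "neighbours T a \<inter> S = {v2}"
  proof -
    have "set (rev vs) \<subseteq> S" "2 \<le> length (rev vs)" using p(2) len by simp_all
    moreover have "length ws \<le> length (rev vs)" if "is_path T a' b' ws" "set ws \<subseteq> S" for a' b' ws
      using longest[OF that] by simp
    ultimately show ?thesis
      using longest_path_end_pendant[OF tree is_path_rev[OF g p(1)]] that by blast
  qed
  ultimately show ?thesis by blast
qed

lemma tree_pendant_exists:
  assumes tree: "is_tree T" and "p \<in> verts T" "q \<in> verts T" "p \<noteq> q"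
  shows "\<exists>l x. neighbours T l = {x}"
proof -
  have "neighbours T l \<subseteq> verts T" for l using graph_edgeD2[OF is_tree_graph[OF tree]] by (auto simp: neighbours_def)
  moreover obtain l x where "neighbours T l \<inter> verts T = {x}"
    using connected_set_two_ends[OF tree subset_refl set_connected_tree_verts[OF tree] assms(2-4)] by blast
  ultimately show ?thesis by (metis inf.absorb1)
qed

section \<open>Epimorphisms\<close>

lemma graph_epi_iff:
  "graph_epi f G H \<longleftrightarrow> f ` verts G = verts H \<and> map_prod f f ` edges G = edges H"
  unfolding graph_epi_def graph_hom_def map_prod_def by auto

lemma graph_epiI:
  assumes "f ` verts G = verts H" "\<And>a b. (a, b) \<in> edges G \<Longrightarrow> (f a, f b) \<in> edges H"
    "\<And>c d. (c, d) \<in> edges H \<Longrightarrow> \<exists>a b. (a, b) \<in> edges G \<and> f a = c \<and> f b = d"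
  shows "graph_epi f G H"
  unfolding graph_epi_iff
proof (intro conjI equalityI subsetI)
  fix e assume "e \<in> edges H"
  then obtain a b where "(a, b) \<in> edges G" "e = (f a, f b)" using assms(3) by (cases e) blast
  then show "e \<in> map_prod f f ` edges G" by (simp add: map_prod_imageI)
qed (use assms(1,2) in auto)

lemma graph_epi_verts: "graph_epi f G H \<Longrightarrow> f ` verts G = verts H"
  by (simp add: graph_epi_iff)

lemma graph_epi_vert: "graph_epi f G H \<Longrightarrow> a \<in> verts G \<Longrightarrow> f a \<in> verts H"
  unfolding graph_epi_iff by blast

lemma graph_epi_edge: "graph_epi f G H \<Longrightarrow> (a, b) \<in> edges G \<Longrightarrow> (f a, f b) \<in> edges H"
  unfolding graph_epi_iff by (metis map_prod_imageI)

lemma graph_epi_edge_surj: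
  assumes "graph_epi f G H" "(c, d) \<in> edges H"
  shows "\<exists>a b. (a, b) \<in> edges G \<and> f a = c \<and> f b = d"
proof -
  have "(c, d) \<in> map_prod f f ` edges G" using assms unfolding graph_epi_iff by simp
  then obtain e where "e \<in> edges G" "(c, d) = map_prod f f e" by (rule imageE)
  then show ?thesis by (cases e) auto
qed

lemma monotone_epi_graph_epi: "monotone_epi f G H \<Longrightarrow> graph_epi f G H"
  by (simp add: monotone_epi_def)

lemma monotone_epi_preimage:
  "monotone_epi f G H \<Longrightarrow> S \<subseteq> verts H \<Longrightarrow> set_connected H S \<Longrightarrow> set_connected G (f -` S \<inter> verts G)"
  by (simp add: monotone_epi_def)

lemma monotone_epi_fibre:
  assumes "monotone_epi f G H" "y \<in> verts H"
  shows "set_connected G (f -` {y} \<inter> verts G)"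
proof -
  have "{y} \<subseteq> verts H" using assms(2) by simp
  then show ?thesis using monotone_epi_preimage[OF assms(1) _ set_connected_singleton] by simp
qed

lemma preimage_split_saturated:
  assumes epi: "graph_epi f G H"
    and fibres: "\<And>y. y \<in> verts H \<Longrightarrow> set_connected G (f -` {y} \<inter> verts G)"
    and P: "P \<subseteq> f -` S \<inter> verts G"
    and no_cross: "\<forall>p\<in>P. \<forall>q\<in>(f -` S \<inter> verts G) - P. (p, q) \<notin> edges G"
    and a: "a \<in> f -` S \<inter> verts G" and b: "b \<in> P" "f b = f a"
  shows "a \<in> P"
proof -
  let ?F = "f -` {f a} \<inter> verts G"
  have "?F \<subseteq> P \<union> ((f -` S \<inter> verts G) - P)" using a by auto
  then have "?F \<subseteq> P \<or> ?F \<subseteq> (f -` S \<inter> verts G) - P"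
    using set_connected_split[OF fibres[OF graph_epi_vert[OF epi]] _ no_cross] a by blast
  moreover have "a \<in> ?F" "b \<in> ?F" using a b P by auto
  ultimately show ?thesis using b(1) by blast
qed

lemma monotone_epiI_fibres:
  assumes g: "is_graph G" and epi: "graph_epi f G H"
    and fibres: "\<And>y. y \<in> verts H \<Longrightarrow> set_connected G (f -` {y} \<inter> verts G)"
  shows "monotone_epi f G H"
  unfolding monotone_epi_def
proof (intro conjI allI impI epi)
  fix S assume S: "S \<subseteq> verts H" "set_connected H S"
  let ?T = "f -` S \<inter> verts G"
  show "set_connected G ?T"
    unfolding set_connected_iff_crossing
  proof (intro allI impI)
    fix P assume P: "P \<subseteq> ?T" "P \<noteq> {}" "?T - P \<noteq> {}"
    show "\<exists>a\<in>P. \<exists>b\<in>?T - P. (a, b) \<in> edges G"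
    proof (rule ccontr)
      assume no_cross: "\<not> ?thesis"
      then have saturated: "a \<in> P" if "a \<in> ?T" "b \<in> P" "f b = f a" for a b
        using preimage_split_saturated[OF epi fibres P(1) _ that] by blast
      have rest: "S - f ` P \<noteq> {}"
      proof -
        obtain b where b: "b \<in> ?T" "b \<notin> P" using P(3) by blast
        have "f b \<notin> f ` P"
        proof
          assume "f b \<in> f ` P"
          then obtain p where "f b = f p" "p \<in> P" by (rule imageE)
          then show False using saturated[OF b(1), of p] b(2) by simp
        qed
        then show ?thesis using b(1) by auto
      qed
      have "f ` P \<subseteq> S" "f ` P \<noteq> {}" using P(1,2) by auto
      then obtain c d where cd: "c \<in> f ` P" "d \<in> S - f ` P" "(c, d) \<in> edges H"
        using set_connected_crossing[OF S(2) _ _ rest] by blast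
      then obtain a b where ab: "(a, b) \<in> edges G" "f a = c" "f b = d"
        using graph_epi_edge_surj[OF epi] by blast
      obtain p where p: "c = f p" "p \<in> P" using cd(1) by (rule imageE)
      have "f p \<in> S" using p(2) P(1) by blast
      then have aT: "a \<in> ?T" using graph_edgeD1[OF g ab(1)] ab(2) p(1) by simp
      have bT: "b \<in> ?T" using graph_edgeD2[OF g ab(1)] cd(2) ab(3) by simp
      have "b \<notin> P"
      proof
        assume "b \<in> P"
        then have "d \<in> f ` P" using ab(3) by blast
        then show False using cd(2) by blast
      qed
      moreover have "a \<in> P" using saturated[OF aT p(2)] ab(2) p(1) by simp
      ultimately show False using no_cross ab(1) bT by blast
    qed
  qed
qed

lemma monotone_epi_comp:
  assumes f: "monotone_epi f G H" and g: "monotone_epi g H K"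
  shows "monotone_epi (\<lambda>x. g (f x)) G K"
proof -
  have ef: "graph_epi f G H" and eg: "graph_epi g H K" using f g by (simp_all add: monotone_epi_def)
  have "graph_epi (\<lambda>x. g (f x)) G K"
  proof (rule graph_epiI)
    have "(\<lambda>x. g (f x)) ` verts G = g ` f ` verts G" by (simp add: image_image)
    then show "(\<lambda>x. g (f x)) ` verts G = verts K" using graph_epi_verts[OF ef] graph_epi_verts[OF eg] by simp
    show "(g (f a), g (f b)) \<in> edges K" if "(a, b) \<in> edges G" for a b
      using graph_epi_edge[OF eg graph_epi_edge[OF ef that]] .
    show "\<exists>a b. (a, b) \<in> edges G \<and> g (f a) = c \<and> g (f b) = d" if cd: "(c, d) \<in> edges K" for c d
    proof -
      obtain a b where "(a, b) \<in> edges H" "g a = c" "g b = d" using graph_epi_edge_surj[OF eg cd] by blast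
      moreover obtain a' b' where "(a', b') \<in> edges G" "f a' = a" "f b' = b"
        using graph_epi_edge_surj[OF ef calculation(1)] by blast
      ultimately show ?thesis by blast
    qed
  qed
  moreover have "set_connected G ((\<lambda>x. g (f x)) -` S \<inter> verts G)"
    if "S \<subseteq> verts K" "set_connected K S" for S
  proof -
    have "set_connected H (g -` S \<inter> verts H)" using monotone_epi_preimage[OF g that] .
    then have "set_connected G (f -` (g -` S \<inter> verts H) \<inter> verts G)"
      by (rule monotone_epi_preimage[OF f Int_lower2])
    moreover have "f -` (g -` S \<inter> verts H) \<inter> verts G = (\<lambda>x. g (f x)) -` S \<inter> verts G"
      using graph_epi_vert[OF ef] by auto
    ultimately show ?thesis by simp
  qed
  ultimately show ?thesis by (simp add: monotone_epi_def)
qed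

lemma monotone_epi_inj:
  assumes "is_graph G" "graph_epi f G H" "inj_on f (verts G)"
  shows "monotone_epi f G H"
proof (rule monotone_epiI_fibres[OF assms(1,2)])
  fix y assume "y \<in> verts H"
  then have "y \<in> f ` verts G" using graph_epi_verts[OF assms(2)] by simp
  then obtain x where "y = f x" "x \<in> verts G" by (rule imageE)
  then have "f -` {y} \<inter> verts G = {x}" using assms(3) by (auto dest: inj_onD)
  then show "set_connected G (f -` {y} \<inter> verts G)" by (simp add: set_connected_singleton)
qed

section \<open>Growing trees by leaves\<close>

definition add_leaf :: "'a graph \<Rightarrow> 'a \<Rightarrow> 'a \<Rightarrow> 'a graph" where
  "add_leaf G x y = (insert y (verts G), edges G \<union> {(x, y), (y, x), (y, y)})"

definition delete_vertex :: "'a graph \<Rightarrow> 'a \<Rightarrow> 'a graph" where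
  "delete_vertex G a = (verts G - {a}, {e \<in> edges G. fst e \<noteq> a \<and> snd e \<noteq> a})"

lemma is_graph_add_leaf: "is_graph G \<Longrightarrow> x \<in> verts G \<Longrightarrow> is_graph (add_leaf G x y)"
  unfolding is_graph_def add_leaf_def by auto

lemma neighbours_add_leaf_leaf:
  "is_graph G \<Longrightarrow> y \<notin> verts G \<Longrightarrow> neighbours (add_leaf G x y) y \<subseteq> {x}"
  by (auto simp: neighbours_def add_leaf_def dest: graph_edgeD1)

lemma is_tree_singleton: "is_tree ({x}, {(x, x)})"
proof (rule is_treeI)
  fix a b vs ws assume "a \<noteq> b" "is_path ({x}, {(x, x)}) a b vs"
  moreover from this have "a \<in> set vs" "b \<in> set vs" "set vs \<subseteq> {x}"
    unfolding is_path_iff by (auto dest: hd_in_set last_in_set)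
  ultimately show "vs = ws" by blast
qed (auto simp: is_graph_def)

lemma add_leaf_path_avoiding_leaf:
  assumes "y \<notin> verts G" "is_path (add_leaf G x y) a b vs" "y \<notin> set vs"
  shows "is_path G a b vs"
proof (rule is_path_restrict[OF assms(2), of "verts G"])
  show "set vs \<subseteq> verts G" using assms(2,3) by (auto simp: is_path_iff add_leaf_def)
  fix u w assume "u \<in> verts G" "w \<in> verts G" "(u, w) \<in> edges (add_leaf G x y)"
  then show "(u, w) \<in> edges G" using assms(1) by (auto simp: add_leaf_def)
qed simp

lemma add_leaf_path_to_leaf:
  assumes g: "is_graph G" "x \<in> verts G" "y \<notin> verts G"
    and p: "is_path (add_leaf G x y) a y vs" and ay: "a \<noteq> y"
  shows "\<exists>ws. vs = ws @ [y] \<and> is_path G a x ws"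
proof -
  obtain ws where vs: "vs = ws @ [y]"
    using p by (cases vs rule: rev_cases) (auto simp: is_path_iff)
  then have "ws \<noteq> []" using p ay by (auto simp: is_path_iff)
  then obtain xs z where ws: "ws = xs @ [z]" by (cases ws rule: rev_cases) auto
  have "(z, y) \<in> edges (add_leaf G x y)" "z \<noteq> y" "y \<notin> set ws"
    using p unfolding vs ws by (auto simp: is_path_iff successively_append_iff)
  then have "z \<in> neighbours (add_leaf G x y) y"
    using graph_edge_sym[OF is_graph_add_leaf[OF g(1,2)]] by (auto simp: neighbours_def)
  then have "z = x" using neighbours_add_leaf_leaf[OF g(1,3), of x] by blast
  have "is_path (add_leaf G x y) a z ws" using is_path_split(1)[of _ a y xs z "[y]"] p vs ws by simp
  then have "is_path G a x ws" using add_leaf_path_avoiding_leaf[OF g(3)] \<open>y \<notin> set ws\<close> \<open>z = x\<close> by blast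
  then show ?thesis using vs by blast
qed

lemma add_leaf_path_exists:
  assumes tree: "is_tree G" and x: "x \<in> verts G" and y: "y \<notin> verts G"
    and ab: "a \<in> verts (add_leaf G x y)" "b \<in> verts (add_leaf G x y)" "a \<noteq> b"
  shows "\<exists>vs. is_path (add_leaf G x y) a b vs"
proof -
  let ?G = "add_leaf G x y"
  have g: "is_graph G" using tree by (rule is_tree_graph)
  have old_path: "is_path ?G a b vs" if "is_path G a b vs" for a b vs
    by (rule is_path_mono[OF that]) (auto simp: add_leaf_def)
  have to_leaf: "\<exists>vs. is_path ?G a y vs" if a: "a \<in> verts G" for a
  proof (cases "a = x")
    case True
    have "is_path ?G x y [x, y]" using x y by (intro is_path_edge) (auto simp: add_leaf_def)
    then show ?thesis using True by blast
  next
    case False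
    then obtain ws where ws: "is_path G a x ws" using tree_path_exists[OF tree a x] by blast
    moreover have "y \<notin> set ws" using ws y by (auto simp: is_path_iff)
    ultimately show ?thesis using is_path_snoc[OF old_path[OF ws]] by (auto simp: add_leaf_def)
  qed
  consider "a = y" "b \<in> verts G" | "b = y" "a \<in> verts G" | "a \<in> verts G" "b \<in> verts G"
    using ab by (auto simp: add_leaf_def)
  then show ?thesis
  proof cases
    case 1
    then show ?thesis using to_leaf is_path_rev[OF is_graph_add_leaf[OF g x]] by blast
  qed (use to_leaf tree_path_exists[OF tree] old_path ab(3) in blast)+
qed

lemma add_leaf_path_to_leaf_unique:
  assumes tree: "is_tree G" and x: "x \<in> verts G" and y: "y \<notin> verts G" and ay: "a \<noteq> y"
    and p: "is_path (add_leaf G x y) a y vs" "is_path (add_leaf G x y) a y ws"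
  shows "vs = ws"
proof -
  have g: "is_graph G" using tree by (rule is_tree_graph)
  obtain vs' where vs': "vs = vs' @ [y]" "is_path G a x vs'"
    using add_leaf_path_to_leaf[OF g x y p(1) ay] by blast
  obtain ws' where ws': "ws = ws' @ [y]" "is_path G a x ws'"
    using add_leaf_path_to_leaf[OF g x y p(2) ay] by blast
  have "vs' = ws'"
  proof (cases "a = x")
    case True
    then show ?thesis using vs'(2) ws'(2) is_path_same_ends by metis
  next
    case False
    then show ?thesis using vs'(2) ws'(2) tree_path_unique[OF tree] by blast
  qed
  then show ?thesis using vs' ws' by simp
qed

lemma add_leaf_path_unique:
  assumes tree: "is_tree G" and x: "x \<in> verts G" and y: "y \<notin> verts G"
    and ab: "a \<noteq> b" and p: "is_path (add_leaf G x y) a b vs" "is_path (add_leaf G x y) a b ws"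
  shows "vs = ws"
proof -
  have g: "is_graph G" using tree by (rule is_tree_graph)
  have g': "is_graph (add_leaf G x y)" using is_graph_add_leaf[OF g x] .
  consider "b = y" | "a = y" | "a \<noteq> y" "b \<noteq> y" by blast
  then show ?thesis
  proof cases
    case 1
    then show ?thesis using add_leaf_path_to_leaf_unique[OF tree x y, of a] ab p by blast
  next
    case 2
    then have "rev vs = rev ws"
      using add_leaf_path_to_leaf_unique[OF tree x y, of b] ab is_path_rev[OF g'] p by blast
    then show ?thesis by simp
  next
    case 3
    \<comment> \<open>a path between old vertices cannot pass through the leaf\<close>
    have "y \<notin> set vs" "y \<notin> set ws"
      using pendant_not_inner_vertex[OF g' _ _ _ _ neighbours_add_leaf_leaf[OF g y, of x]] p 3 by metis+
    then have "is_path G a b vs" "is_path G a b ws" using add_leaf_path_avoiding_leaf[OF y] p by blast+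
    then show ?thesis using tree_path_unique[OF tree ab] by blast
  qed
qed

lemma is_tree_add_leaf:
  assumes "is_tree G" "x \<in> verts G" "y \<notin> verts G"
  shows "is_tree (add_leaf G x y)"
proof (rule is_treeI)
  show "is_graph (add_leaf G x y)" using is_graph_add_leaf[OF is_tree_graph[OF assms(1)] assms(2)] .
  show "finite (verts (add_leaf G x y))" using is_tree_finite[OF assms(1)] by (simp add: add_leaf_def)
qed (use add_leaf_path_exists[OF assms] add_leaf_path_unique[OF assms] in blast)+

lemma is_tree_delete_pendant:
  assumes tree: "is_tree T" and pendant: "neighbours T l \<subseteq> {x}"
  shows "is_tree (delete_vertex T l)"
proof (rule is_treeI)
  have g: "is_graph T" using tree by (rule is_tree_graph)
  then show "is_graph (delete_vertex T l)" unfolding is_graph_def delete_vertex_def by auto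
  show "finite (verts (delete_vertex T l))" using is_tree_finite[OF tree] by (simp add: delete_vertex_def)
next
  fix a b assume ab: "a \<in> verts (delete_vertex T l)" "b \<in> verts (delete_vertex T l)" "a \<noteq> b"
  then obtain vs where vs: "is_path T a b vs" using tree_path_exists[OF tree] by (auto simp: delete_vertex_def)
  have "l \<notin> set vs" using pendant_not_inner_vertex[OF is_tree_graph[OF tree] vs _ _ _ pendant] ab
    by (auto simp: delete_vertex_def)
  then have "set vs \<subseteq> verts T - {l}" using vs by (auto simp: is_path_iff)
  then show "\<exists>vs. is_path (delete_vertex T l) a b vs"
    by (intro exI[of _ vs] is_path_restrict[OF vs, of "verts T - {l}"]) (auto simp: delete_vertex_def)
next
  fix a b vs ws assume "a \<noteq> b" "is_path (delete_vertex T l) a b vs" "is_path (delete_vertex T l) a b ws"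
  then show "vs = ws"
    using tree_path_unique[OF tree] is_path_mono[of "delete_vertex T l" _ _ _ T]
    by (auto simp: delete_vertex_def)
qed

lemma add_leaf_delete_pendant:
  assumes g: "is_graph T" and pendant: "neighbours T l = {x}"
  shows "add_leaf (delete_vertex T l) x l = T"
proof -
  have lx: "(l, x) \<in> edges T" "l \<noteq> x" using pendant by (auto simp: neighbours_def)
  have l_edge: "z = l \<or> z = x" if "(l, z) \<in> edges T" for z using that pendant by (auto simp: neighbours_def)
  have l: "l \<in> verts T" using graph_edgeD1[OF g lx(1)] .
  have "edges T = {e \<in> edges T. fst e \<noteq> l \<and> snd e \<noteq> l} \<union> {(x, l), (l, x), (l, l)}"
  proof (intro equalityI subsetI)
    fix e assume "e \<in> edges T"
    moreover obtain a b where "e = (a, b)" by (cases e)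
    ultimately show "e \<in> {e \<in> edges T. fst e \<noteq> l \<and> snd e \<noteq> l} \<union> {(x, l), (l, x), (l, l)}"
      using l_edge[of b] l_edge[of a] graph_edge_sym[OF g] by auto
  qed (use lx graph_edge_sym[OF g lx(1)] graph_edge_refl[OF g l] in auto)
  moreover have "insert l (verts T - {l}) = verts T" using l by auto
  ultimately show ?thesis by (simp add: add_leaf_def delete_vertex_def verts_def edges_def)
qed

text \<open>Trees are exactly the graphs grown from a single vertex by attaching leaves; this
  characterisation is what makes contraction and subdivision easy to handle.\<close>

inductive grown_tree :: "'a graph \<Rightarrow> bool" where
  grown_singleton: "grown_tree ({x}, {(x, x)})"
| grown_add_leaf: "grown_tree G \<Longrightarrow> x \<in> verts G \<Longrightarrow> y \<notin> verts G \<Longrightarrow> grown_tree (add_leaf G x y)"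

lemma grown_tree_is_tree: "grown_tree G \<Longrightarrow> is_tree G"
  by (induction rule: grown_tree.induct) (simp_all add: is_tree_singleton is_tree_add_leaf)

lemma is_tree_grown_tree:
  assumes "is_tree T" "verts T \<noteq> {}"
  shows "grown_tree T"
  using assms
proof (induction "card (verts T)" arbitrary: T rule: less_induct)
  case less
  have g: "is_graph T" and fin: "finite (verts T)"
    using less.prems(1) by (simp_all add: is_tree_graph is_tree_finite)
  show ?case
  proof (cases "\<exists>p\<in>verts T. \<exists>q\<in>verts T. p \<noteq> q")
    case False
    then obtain x where x: "verts T = {x}" using less.prems(2) by blast
    then have "edges T = {(x, x)}" using g unfolding is_graph_def by auto
    then have "T = ({x}, {(x, x)})" using x by (metis prod.collapse verts_def edges_def)
    then show ?thesis by (simp add: grown_singleton)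
  next
    case True
    then obtain l x where pendant: "neighbours T l = {x}"
      using tree_pendant_exists[OF less.prems(1)] by blast
    then have lx: "(l, x) \<in> edges T" "l \<noteq> x" by (auto simp: neighbours_def)
    have l: "l \<in> verts T" and x: "x \<in> verts T" using graph_edgeD1[OF g lx(1)] graph_edgeD2[OF g lx(1)] .
    have "card (verts (delete_vertex T l)) < card (verts T)"
      using card_Diff1_less[OF fin l] by (simp add: delete_vertex_def)
    moreover have "verts (delete_vertex T l) \<noteq> {}" using x lx(2) by (auto simp: delete_vertex_def)
    ultimately have "grown_tree (delete_vertex T l)"
      using less.hyps is_tree_delete_pendant[OF less.prems(1)] pendant by blast
    moreover have "x \<in> verts (delete_vertex T l)" "l \<notin> verts (delete_vertex T l)"
      using x lx(2) by (auto simp: delete_vertex_def)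
    ultimately have "grown_tree (add_leaf (delete_vertex T l) x l)" by (rule grown_add_leaf)
    then show ?thesis using add_leaf_delete_pendant[OF g pendant] by simp
  qed
qed

section \<open>Contraction and subdivision\<close>

definition merge :: "'a \<Rightarrow> 'a \<Rightarrow> 'a \<Rightarrow> 'a" where
  "merge u v z = (if z = u then v else z)"

definition contract :: "'a graph \<Rightarrow> 'a \<Rightarrow> 'a \<Rightarrow> 'a graph" where
  "contract G u v = (verts G - {u}, map_prod (merge u v) (merge u v) ` edges G)"

definition subdivide :: "'a graph \<Rightarrow> 'a \<Rightarrow> 'a \<Rightarrow> 'a \<Rightarrow> 'a graph" where
  "subdivide G s t m = (insert m (verts G),
     edges G - {(s, t), (t, s)} \<union> {(s, m), (m, s), (m, t), (t, m), (m, m)})"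

lemma merge_same [simp]: "merge u v u = v"
  and merge_other [simp]: "z \<noteq> u \<Longrightarrow> merge u v z = z"
  by (simp_all add: merge_def)

lemma grown_tree_rename:
  assumes "grown_tree G" "inj_on f (verts G)"
  shows "grown_tree (f ` verts G, map_prod f f ` edges G)"
  using assms
proof (induction rule: grown_tree.induct)
  case (grown_singleton x)
  show ?case using grown_tree.grown_singleton[of "f x"] by simp
next
  case (grown_add_leaf G x y)
  have "inj_on f (verts G)" "f y \<notin> f ` verts G"
    using grown_add_leaf.prems grown_add_leaf.hyps(3) by (auto simp: add_leaf_def)
  then have "grown_tree (add_leaf (f ` verts G, map_prod f f ` edges G) (f x) (f y))"
    using grown_add_leaf by (intro grown_tree.grown_add_leaf) auto
  then show ?case by (simp add: add_leaf_def)
qed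

lemma contract_add_leaf:
  "u \<noteq> y \<Longrightarrow> contract (add_leaf G x y) u v = add_leaf (contract G u v) (merge u v x) y"
  by (auto simp: contract_def add_leaf_def)

lemma contract_add_leaf_onto_leaf:
  assumes g: "is_graph G" and x: "x \<in> verts G" and y: "y \<notin> verts G"
  shows "contract (add_leaf G x y) x y = (merge x y ` verts G, map_prod (merge x y) (merge x y) ` edges G)"
proof -
  have "merge x y ` verts G = insert y (verts G) - {x}"
    using x y by (auto simp: merge_def image_iff)
  moreover have "y \<noteq> x" using x y by blast
  then have "map_prod (merge x y) (merge x y) ` {(x, y), (y, x), (y, y)}
      \<subseteq> map_prod (merge x y) (merge x y) ` edges G"
    using map_prod_imageI[OF graph_edge_refl[OF g x], of "merge x y" "merge x y"] by auto
  then have "map_prod (merge x y) (merge x y) ` (edges G \<union> {(x, y), (y, x), (y, y)})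
      = map_prod (merge x y) (merge x y) ` edges G"
    by (subst image_Un) (rule Un_absorb2)
  ultimately show ?thesis unfolding contract_def add_leaf_def by simp
qed

lemma contract_add_leaf_leaf:
  assumes g: "is_graph G" and x: "x \<in> verts G" and y: "y \<notin> verts G"
  shows "contract (add_leaf G x y) y x = G"
proof -
  have "map_prod (merge y x) (merge y x) e = e" if "e \<in> edges G" for e
    using that graph_edgeD1[OF g] graph_edgeD2[OF g] y by (cases e) (auto simp: merge_def)
  then have "map_prod (merge y x) (merge y x) ` edges G = edges G" by force
  moreover have "map_prod (merge y x) (merge y x) ` {(x, y), (y, x), (y, y)} = {(x, x)}"
    using x y by (auto simp: merge_def)
  ultimately have "map_prod (merge y x) (merge y x) ` (edges G \<union> {(x, y), (y, x), (y, y)}) = edges G"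
    using graph_edge_refl[OF g x] by (subst image_Un) auto
  moreover have "insert y (verts G) - {y} = verts G" using y by auto
  ultimately show ?thesis unfolding contract_def add_leaf_def by (simp add: verts_def edges_def)
qed

lemma grown_tree_contract:
  assumes "grown_tree G" "(u, v) \<in> edges G" "u \<noteq> v"
  shows "grown_tree (contract G u v)"
  using assms
proof (induction arbitrary: u v rule: grown_tree.induct)
  case (grown_singleton x)
  then show ?case by simp
next
  case (grown_add_leaf G x y)
  have g: "is_graph G" using grown_tree_is_tree[OF grown_add_leaf.hyps(1)] by (rule is_tree_graph)
  consider "(u, v) = (x, y)" | "(u, v) = (y, x)" | "(u, v) \<in> edges G"
    using grown_add_leaf.prems by (auto simp: add_leaf_def)
  then show ?case
  proof cases
    case 1
    have "inj_on (merge x y) (verts G)" using grown_add_leaf.hyps(3) by (auto simp: inj_on_def merge_def)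
    then show ?thesis
      using 1 grown_tree_rename[OF grown_add_leaf.hyps(1)] contract_add_leaf_onto_leaf[OF g grown_add_leaf.hyps(2,3)]
      by simp
  next
    case 2
    then show ?thesis using contract_add_leaf_leaf[OF g grown_add_leaf.hyps(2,3)] grown_add_leaf.hyps(1) by simp
  next
    case 3
    have "u \<noteq> y" "v \<in> verts G" using 3 g grown_add_leaf.hyps(3) by (auto dest: graph_edgeD1 graph_edgeD2)
    then have "merge u v x \<in> verts (contract G u v)" "y \<notin> verts (contract G u v)"
      using grown_add_leaf.hyps(2,3) grown_add_leaf.prems(2) by (auto simp: contract_def merge_def)
    then have "grown_tree (add_leaf (contract G u v) (merge u v x) y)"
      using grown_add_leaf.IH[OF 3 grown_add_leaf.prems(2)] by (intro grown_tree.grown_add_leaf)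
    then show ?thesis using contract_add_leaf[OF \<open>u \<noteq> y\<close>] by simp
  qed
qed

lemma grown_tree_subdivide:
  assumes "grown_tree G" "(s, t) \<in> edges G" "s \<noteq> t" "m \<notin> verts G"
  shows "grown_tree (subdivide G s t m)"
  using assms
proof (induction arbitrary: s t m rule: grown_tree.induct)
  case (grown_singleton x)
  then show ?case by simp
next
  case (grown_add_leaf G x y)
  have g: "is_graph G" using grown_tree_is_tree[OF grown_add_leaf.hyps(1)] by (rule is_tree_graph)
  have m: "m \<notin> verts G" "m \<noteq> y" using grown_add_leaf.prems(3) by (auto simp: add_leaf_def)
  consider "(s, t) = (x, y) \<or> (s, t) = (y, x)" | "(s, t) \<in> edges G"
    using grown_add_leaf.prems(1,2) by (auto simp: add_leaf_def)
  then show ?case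
  proof cases
    case 1
    have "grown_tree (add_leaf (add_leaf G x m) m y)"
      using grown_add_leaf.hyps m
      by (intro grown_tree.grown_add_leaf grown_tree.grown_add_leaf[OF grown_add_leaf.hyps(1)])
        (auto simp: add_leaf_def)
    moreover have "add_leaf (add_leaf G x m) m y = subdivide (add_leaf G x y) s t m"
      using 1 m grown_add_leaf.hyps(2,3) graph_edgeD1[OF g] graph_edgeD2[OF g]
      by (auto simp: add_leaf_def subdivide_def)
    ultimately show ?thesis by simp
  next
    case 2
    have "s \<in> verts G" "t \<in> verts G" using 2 g by (auto dest: graph_edgeD1 graph_edgeD2)
    have "grown_tree (add_leaf (subdivide G s t m) x y)"
      using grown_add_leaf.IH[OF 2 grown_add_leaf.prems(2) m(1)] grown_add_leaf.hyps(2,3) m(2)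
      by (intro grown_tree.grown_add_leaf) (auto simp: subdivide_def)
    moreover have "add_leaf (subdivide G s t m) x y = subdivide (add_leaf G x y) s t m"
      using \<open>s \<in> verts G\<close> \<open>t \<in> verts G\<close> grown_add_leaf.hyps(3) m
      by (auto simp: add_leaf_def subdivide_def)
    ultimately show ?thesis by simp
  qed
qed

lemma is_tree_contract:
  assumes "is_tree T" "(u, v) \<in> edges T" "u \<noteq> v"
  shows "is_tree (contract T u v)"
  using assms graph_edgeD1[OF is_tree_graph[OF assms(1)] assms(2)]
  by (blast intro: grown_tree_is_tree grown_tree_contract is_tree_grown_tree)

lemma is_tree_subdivide:
  assumes "is_tree T" "(s, t) \<in> edges T" "s \<noteq> t" "m \<notin> verts T"
  shows "is_tree (subdivide T s t m)"
  using assms graph_edgeD1[OF is_tree_graph[OF assms(1)] assms(2)]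
  by (blast intro: grown_tree_is_tree grown_tree_subdivide is_tree_grown_tree)

lemma is_tree_rename:
  assumes "is_tree T" "inj_on f (verts T)"
  shows "is_tree (f ` verts T, map_prod f f ` edges T)"
proof (cases "verts T = {}")
  case False
  then show ?thesis using assms by (blast intro: grown_tree_is_tree grown_tree_rename is_tree_grown_tree)
qed (use assms in \<open>auto simp: is_tree_def is_graph_def\<close>)

lemma card_insert_le_Suc: "finite A \<Longrightarrow> card (insert a A) \<le> Suc (card A)"
  by (simp add: card_insert_if)

lemma card_insert_Diff_le: "finite A \<Longrightarrow> a \<in> A \<Longrightarrow> card (insert b (A - {a})) \<le> card A"
  using card_insert_le_Suc[of "A - {a}" b] card_Suc_Diff1[of A a] by simp

lemma vorder_add_leaf_le:
  assumes g: "is_graph G" "finite (verts G)" and y: "y \<notin> verts G"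
  shows "vorder (add_leaf G x y) z \<le> (if z = y then 1 else if z = x then Suc (vorder G z) else vorder G z)"
proof -
  have fin: "finite (neighbours G z)" using finite_neighbours[OF g] .
  have no_y: "(y, b) \<notin> edges G" for b using y graph_edgeD1[OF g(1)] by blast
  consider "z = y" | "z \<noteq> y" "z = x" | "z \<noteq> y" "z \<noteq> x" by blast
  then show ?thesis
  proof cases
    case 1
    then have "neighbours (add_leaf G x y) z \<subseteq> {x}" using no_y by (auto simp: neighbours_def add_leaf_def)
    then have "card (neighbours (add_leaf G x y) z) \<le> card {x}" by (rule card_mono[rotated]) simp
    then show ?thesis using 1 by (simp add: vorder_neighbours)
  next
    case 2
    then have "neighbours (add_leaf G x y) z \<subseteq> insert y (neighbours G z)"
      by (auto simp: neighbours_def add_leaf_def)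
    then have "card (neighbours (add_leaf G x y) z) \<le> card (insert y (neighbours G z))"
      using fin by (intro card_mono) auto
    also have "\<dots> \<le> Suc (card (neighbours G z))" using card_insert_le_Suc[OF fin] .
    finally show ?thesis using 2 by (simp add: vorder_neighbours)
  next
    case 3
    then have "neighbours (add_leaf G x y) z \<subseteq> neighbours G z" by (auto simp: neighbours_def add_leaf_def)
    then show ?thesis using 3 fin by (simp add: vorder_neighbours card_mono)
  qed
qed

lemma vorder_subdivide_le:
  assumes g: "is_graph G" "finite (verts G)" and st: "(s, t) \<in> edges G" "s \<noteq> t"
    and m: "m \<notin> verts G"
  shows "vorder (subdivide G s t m) z \<le> (if z = m then 2 else vorder G z)"
proof -
  let ?N = "neighbours G z"
  have fin: "finite ?N" using finite_neighbours[OF g] .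
  have no_m: "(m, b) \<notin> edges G" for b using m graph_edgeD1[OF g(1)] by blast
  consider "z = m" | "z \<noteq> m" "z = s" | "z \<noteq> m" "z = t" | "z \<noteq> m" "z \<noteq> s" "z \<noteq> t" by blast
  then show ?thesis
  proof cases
    case 1
    then have "neighbours (subdivide G s t m) z \<subseteq> {s, t}"
      using no_m by (auto simp: neighbours_def subdivide_def)
    then have "card (neighbours (subdivide G s t m) z) \<le> card {s, t}" by (rule card_mono[rotated]) simp
    then show ?thesis using 1 st(2) by (simp add: vorder_neighbours)
  next
    case 2
    have "t \<in> ?N" using 2 st by (simp add: neighbours_def)
    have "neighbours (subdivide G s t m) z \<subseteq> insert m (?N - {t})"
      using 2 by (auto simp: neighbours_def subdivide_def)
    then have "card (neighbours (subdivide G s t m) z) \<le> card (insert m (?N - {t}))"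
      using fin by (intro card_mono) auto
    also have "\<dots> \<le> card ?N" using card_insert_Diff_le[OF fin \<open>t \<in> ?N\<close>] .
    finally show ?thesis using 2 by (simp add: vorder_neighbours)
  next
    case 3
    have "s \<in> ?N" using 3 st graph_edge_sym[OF g(1) st(1)] by (simp add: neighbours_def)
    have "neighbours (subdivide G s t m) z \<subseteq> insert m (?N - {s})"
      using 3 by (auto simp: neighbours_def subdivide_def)
    then have "card (neighbours (subdivide G s t m) z) \<le> card (insert m (?N - {s}))"
      using fin by (intro card_mono) auto
    also have "\<dots> \<le> card ?N" using card_insert_Diff_le[OF fin \<open>s \<in> ?N\<close>] .
    finally show ?thesis using 3 by (simp add: vorder_neighbours)
  next
    case 4
    then have "neighbours (subdivide G s t m) z \<subseteq> ?N" by (auto simp: neighbours_def subdivide_def)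
    then show ?thesis using 4 fin by (simp add: vorder_neighbours card_mono)
  qed
qed

lemma in_TM3D:
  assumes "in_TM3 T"
  shows "is_tree T" "is_graph T" "finite (verts T)" "card (verts T) \<ge> 2"
    "\<And>x. x \<in> verts T \<Longrightarrow> vorder T x \<le> 3"
  using assms is_tree_graph[of T] unfolding in_TM3_def is_tree_def by auto

lemma in_TM3_subdivide:
  assumes T: "in_TM3 T" and st: "(s, t) \<in> edges T" "s \<noteq> t" and m: "m \<notin> verts T"
  shows "in_TM3 (subdivide T s t m)"
proof -
  note T' = in_TM3D[OF T]
  have "card (verts T) \<le> card (verts (subdivide T s t m))"
    using T'(3) by (simp add: subdivide_def card_insert_le)
  moreover have "vorder (subdivide T s t m) z \<le> 3" if "z \<in> verts (subdivide T s t m)" for z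
    using vorder_subdivide_le[OF T'(2,3) st m, of z] T'(5)[of z] that
    by (auto simp: subdivide_def split: if_splits)
  ultimately show ?thesis using is_tree_subdivide[OF T'(1) st m] T'(4) by (simp add: in_TM3_def)
qed

lemma in_TM3_add_leaf_subdivide:
  assumes T: "in_TM3 T" and st: "(s, t) \<in> edges T" "s \<noteq> t" and m: "m \<notin> verts T"
    and n: "n \<notin> verts T" "n \<noteq> m"
  shows "in_TM3 (add_leaf (subdivide T s t m) m n)"
proof -
  let ?S = "subdivide T s t m"
  note T' = in_TM3D[OF T] and S' = in_TM3D[OF in_TM3_subdivide[OF T st m]]
  have n': "n \<notin> verts ?S" "m \<in> verts ?S" using n by (auto simp: subdivide_def)
  have "card (verts ?S) \<le> card (verts (add_leaf ?S m n))"
    using S'(3) by (simp add: add_leaf_def card_insert_le)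
  moreover have "vorder (add_leaf ?S m n) z \<le> 3" if "z \<in> verts (add_leaf ?S m n)" for z
  proof -
    have "vorder ?S m \<le> 2" using vorder_subdivide_le[OF T'(2,3) st m, of m] by simp
    then show ?thesis
      using vorder_add_leaf_le[OF S'(2,3) n'(1), of m z] S'(5)[of z] that
      by (auto simp: add_leaf_def split: if_splits)
  qed
  ultimately show ?thesis using is_tree_add_leaf[OF S'(1) n'(2,1)] S'(4) by (simp add: in_TM3_def)
qed



lemma is_graph_subdivide:
  assumes "is_graph G" "(s, t) \<in> edges G" "s \<noteq> t"
  shows "is_graph (subdivide G s t m)"
  using assms unfolding is_graph_def subdivide_def by auto

lemma edges_contract_iff:
  "(c, d) \<in> edges (contract G u v) \<longleftrightarrow> (\<exists>a b. (a, b) \<in> edges G \<and> c = merge u v a \<and> d = merge u v b)"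
  by (auto simp: contract_def)

lemma is_graph_contract:
  assumes g: "is_graph B" and v: "v \<in> verts B" and uv: "u \<noteq> v"
  shows "is_graph (contract B u v)"
  unfolding is_graph_def
proof (intro conjI ballI allI impI subsetI)
  have merge_in: "merge u v a \<in> verts (contract B u v)" if "a \<in> verts B" for a
    using that v uv by (simp add: merge_def contract_def)
  fix e assume "e \<in> edges (contract B u v)"
  then obtain a b where "(a, b) \<in> edges B" "e = (merge u v a, merge u v b)"
    by (auto simp: contract_def)
  then show "e \<in> verts (contract B u v) \<times> verts (contract B u v)"
    using merge_in graph_edgeD1[OF g] graph_edgeD2[OF g] by simp
next
  fix a assume "a \<in> verts (contract B u v)"
  then have "(a, a) \<in> edges B" "a \<noteq> u" using graph_edge_refl[OF g] by (auto simp: contract_def)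
  then show "(a, a) \<in> edges (contract B u v)" unfolding edges_contract_iff by force
next
  fix a b assume "(a, b) \<in> edges (contract B u v)"
  then show "(b, a) \<in> edges (contract B u v)"
    using graph_edge_sym[OF g] unfolding edges_contract_iff by blast
qed

lemma monotone_epi_merge:
  assumes g: "is_graph G" and uv: "(u, v) \<in> edges G" "u \<noteq> v"
  shows "monotone_epi (merge u v) G (contract G u v)"
proof -
  have v: "v \<in> verts G" using graph_edgeD2[OF g uv(1)] .
  have "merge u v ` verts G = verts G - {u}" using v uv(2) by (auto simp: merge_def image_iff)
  then have epi: "graph_epi (merge u v) G (contract G u v)" by (simp add: graph_epi_iff contract_def)
  show ?thesis
  proof (rule monotone_epiI_fibres[OF g epi])
    fix z assume "z \<in> verts (contract G u v)"
    then have z: "z \<in> verts G" "z \<noteq> u" by (auto simp: contract_def)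
    show "set_connected G (merge u v -` {z} \<inter> verts G)"
    proof (cases "z = v")
      case True
      then have "merge u v -` {z} \<inter> verts G = {u, v}"
        using z graph_edgeD1[OF g uv(1)] by (auto simp: merge_def split: if_splits)
      then show ?thesis using set_connected_edge[OF uv(1) graph_edge_sym[OF g uv(1)]] by simp
    next
      case False
      then have "merge u v -` {z} \<inter> verts G = {z}" using z by (auto simp: merge_def split: if_splits)
      then show ?thesis by (simp add: set_connected_singleton)
    qed
  qed
qed

lemma contract_subdivide:
  assumes g: "is_graph G" and st: "(s, t) \<in> edges G" "s \<noteq> t" and m: "m \<notin> verts G"
  shows "contract (subdivide G s t m) m s = G"
proof -
  have old: "map_prod (merge m s) (merge m s) e = e" if "e \<in> edges G" for e
    using that graph_edgeD1[OF g] graph_edgeD2[OF g] m by (cases e) (auto simp: merge_def)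
  have s: "(s, s) \<in> edges G" using graph_edge_refl[OF g graph_edgeD1[OF g st(1)]] .
  have "map_prod (merge m s) (merge m s) ` edges (subdivide G s t m) = edges G"
  proof (intro equalityI subsetI)
    fix e assume "e \<in> map_prod (merge m s) (merge m s) ` edges (subdivide G s t m)"
    then show "e \<in> edges G"
      using old st s graph_edge_sym[OF g st(1)] by (auto simp: subdivide_def merge_def)
  next
    fix e assume e: "e \<in> edges G"
    show "e \<in> map_prod (merge m s) (merge m s) ` edges (subdivide G s t m)"
    proof (cases "e = (s, t) \<or> e = (t, s)")
      case True
      then have "e = map_prod (merge m s) (merge m s) (m, t) \<or> e = map_prod (merge m s) (merge m s) (t, m)"
        using old[OF e] e by (auto simp: merge_def)
      then show ?thesis by (auto simp: subdivide_def)
    next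
      case False
      then show ?thesis using old[OF e] e by (force simp: subdivide_def)
    qed
  qed
  moreover have "insert m (verts G) - {m} = verts G" using m by auto
  ultimately show ?thesis by (simp add: contract_def subdivide_def verts_def edges_def)
qed

lemma graph_epi_add_leaf:
  assumes g: "is_graph G" and h: "graph_epi h G H" and x: "x \<in> verts G" and y: "y \<notin> verts G"
  shows "graph_epi (h(y := y')) (add_leaf G x y) (add_leaf H (h x) y')"
proof -
  have "h(y := y') ` verts G = h ` verts G" by (rule image_cong) (use y in auto)
  moreover have "map_prod (h(y := y')) (h(y := y')) e = map_prod h h e" if "e \<in> edges G" for e
    using that y graph_edgeD1[OF g] graph_edgeD2[OF g] by (cases e) auto
  then have "map_prod (h(y := y')) (h(y := y')) ` edges G = map_prod h h ` edges G"
    by (rule image_cong[OF refl])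
  ultimately show ?thesis using h x y unfolding graph_epi_iff add_leaf_def by auto
qed

lemma monotone_epi_add_leaf:
  assumes g: "is_graph G" and h: "monotone_epi h G H" and x: "x \<in> verts G"
    and y: "y \<notin> verts G" and y': "y' \<notin> verts H"
  shows "monotone_epi (h(y := y')) (add_leaf G x y) (add_leaf H (h x) y')"
proof (rule monotone_epiI_fibres[OF is_graph_add_leaf[OF g x]])
  have ep: "graph_epi h G H" using h by (rule monotone_epi_graph_epi)
  show "graph_epi (h(y := y')) (add_leaf G x y) (add_leaf H (h x) y')"
    by (rule graph_epi_add_leaf[OF g ep x y])
  fix z assume z: "z \<in> verts (add_leaf H (h x) y')"
  show "set_connected (add_leaf G x y) (h(y := y') -` {z} \<inter> verts (add_leaf G x y))"
  proof (cases "z = y'")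
    case True
    have "h(y := y') -` {z} \<inter> verts (add_leaf G x y) = {y}"
      using True y' graph_epi_vert[OF ep] by (auto simp: add_leaf_def split: if_splits)
    then show ?thesis by (simp add: set_connected_singleton)
  next
    case False
    then have zH: "z \<in> verts H" using z by (simp add: add_leaf_def)
    have fib: "h(y := y') -` {z} \<inter> verts (add_leaf G x y) = h -` {z} \<inter> verts G"
      using False y by (auto simp: add_leaf_def split: if_splits)
    have "set_connected (add_leaf G x y) (h -` {z} \<inter> verts G)"
      by (rule set_connected_mono_edges[OF monotone_epi_fibre[OF h zH]]) (simp add: add_leaf_def)
    then show ?thesis using fib by simp
  qed
qed

lemma graph_epi_subdivide:
  assumes g: "is_graph G" and h: "graph_epi h G H" and st: "(s, t) \<in> edges G" and m: "m \<notin> verts G"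
    and unique: "\<And>a b. (a, b) \<in> edges G \<Longrightarrow> h a = h s \<Longrightarrow> h b = h t \<Longrightarrow> a = s \<and> b = t"
  shows "graph_epi (h(m := m')) (subdivide G s t m) (subdivide H (h s) (h t) m')"
proof -
  let ?E = "edges G - {(s, t), (t, s)}"
  have "h(m := m') ` verts G = h ` verts G" by (rule image_cong) (use m in auto)
  moreover have "map_prod (h(m := m')) (h(m := m')) e = map_prod h h e" if "e \<in> ?E" for e
    using that m graph_edgeD1[OF g] graph_edgeD2[OF g] by (cases e) auto
  then have "map_prod (h(m := m')) (h(m := m')) ` ?E = map_prod h h ` ?E"
    by (rule image_cong[OF refl])
  moreover have "map_prod h h ` ?E = edges H - {(h s, h t), (h t, h s)}"
  proof (intro equalityI subsetI)
    fix e assume "e \<in> map_prod h h ` ?E"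
    then obtain a b where "(a, b) \<in> ?E" "e = (h a, h b)" by auto
    then show "e \<in> edges H - {(h s, h t), (h t, h s)}"
      using graph_epi_edge[OF h] unique[of a b] unique[of b a] graph_edge_sym[OF g] by auto
  next
    fix e assume e: "e \<in> edges H - {(h s, h t), (h t, h s)}"
    then obtain a b where "(a, b) \<in> edges G" "e = (h a, h b)"
      using graph_epi_edge_surj[OF h] by (cases e) blast
    then show "e \<in> map_prod h h ` ?E" using e by (auto intro: map_prod_imageI)
  qed
  moreover have "s \<noteq> m" "t \<noteq> m"
    using m graph_edgeD1[OF g st] graph_edgeD2[OF g st] by auto
  then have "map_prod (h(m := m')) (h(m := m')) ` {(s, m), (m, s), (m, t), (t, m), (m, m)}
      = {(h s, m'), (m', h s), (m', h t), (h t, m'), (m', m')}" by simp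
  ultimately show ?thesis using graph_epi_verts[OF h]
    unfolding graph_epi_iff subdivide_def verts_pair edges_pair image_Un image_insert fun_upd_same
    by simp
qed

lemma monotone_epi_subdivide:
  assumes g: "is_graph G" and h: "monotone_epi h G H" and st: "(s, t) \<in> edges G" "h s \<noteq> h t"
    and m: "m \<notin> verts G" and m': "m' \<notin> verts H"
    and unique: "\<And>a b. (a, b) \<in> edges G \<Longrightarrow> h a = h s \<Longrightarrow> h b = h t \<Longrightarrow> a = s \<and> b = t"
  shows "monotone_epi (h(m := m')) (subdivide G s t m) (subdivide H (h s) (h t) m')"
proof -
  have ep: "graph_epi h G H" using h by (rule monotone_epi_graph_epi)
  have "s \<noteq> t" using st(2) by blast
  show ?thesis
  proof (rule monotone_epiI_fibres[OF is_graph_subdivide[OF g st(1) \<open>s \<noteq> t\<close>]])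
    show "graph_epi (h(m := m')) (subdivide G s t m) (subdivide H (h s) (h t) m')"
      by (rule graph_epi_subdivide[OF g ep st(1) m unique])
    fix z assume z: "z \<in> verts (subdivide H (h s) (h t) m')"
    show "set_connected (subdivide G s t m) (h(m := m') -` {z} \<inter> verts (subdivide G s t m))"
    proof (cases "z = m'")
      case True
      have "h(m := m') -` {z} \<inter> verts (subdivide G s t m) = {m}"
        using True m' graph_epi_vert[OF ep] by (auto simp: subdivide_def split: if_splits)
      then show ?thesis by (simp add: set_connected_singleton)
    next
      case False
      then have zH: "z \<in> verts H" using z by (simp add: subdivide_def)
      have fib: "h(m := m') -` {z} \<inter> verts (subdivide G s t m) = h -` {z} \<inter> verts G"
        using False m by (auto simp: subdivide_def split: if_splits)
      \<comment> \<open>a fibre never contains both ends of the subdivided edge\<close>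
      have "set_connected (subdivide G s t m) (h -` {z} \<inter> verts G)"
        by (rule set_connected_mono_edges[OF monotone_epi_fibre[OF h zH]])
          (use st(2) in \<open>auto simp: subdivide_def\<close>)
      then show ?thesis using fib by simp
    qed
  qed
qed

lemma graph_epi_contract:
  assumes f: "graph_epi f B A" and v: "v \<in> verts B" and uv: "u \<noteq> v" "f u = f v"
  shows "graph_epi f (contract B u v) A"
proof -
  have f_merge: "f \<circ> merge u v = f" using uv by (auto simp: merge_def)
  have "merge u v ` verts B = verts B - {u}" using v uv(1) by (auto simp: merge_def image_iff)
  then have "f ` (verts B - {u}) = f ` verts B" using f_merge by (metis image_comp)
  moreover have "map_prod f f ` map_prod (merge u v) (merge u v) ` edges B = map_prod f f ` edges B"
    using f_merge by (simp add: image_comp map_prod.comp)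
  ultimately show ?thesis using f unfolding graph_epi_iff contract_def by simp
qed

lemma monotone_epi_contract:
  assumes g: "is_graph B" and f: "monotone_epi f B A" and v: "v \<in> verts B"
    and uv: "u \<noteq> v" "f u = f v"
  shows "monotone_epi f (contract B u v) A"
proof -
  have ep: "graph_epi f B A" using f by (rule monotone_epi_graph_epi)
  show ?thesis
  proof (rule monotone_epiI_fibres[OF is_graph_contract[OF g v uv(1)] graph_epi_contract[OF ep v uv]])
    fix y assume y: "y \<in> verts A"
    have "set_connected (contract B u v) (merge u v ` (f -` {y} \<inter> verts B))"
      by (rule set_connected_image[OF monotone_epi_fibre[OF f y]]) (simp add: contract_def map_prod_imageI)
    moreover have "merge u v ` (f -` {y} \<inter> verts B) = f -` {y} \<inter> verts (contract B u v)"
    proof (intro equalityI subsetI)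
      fix z assume "z \<in> merge u v ` (f -` {y} \<inter> verts B)"
      then show "z \<in> f -` {y} \<inter> verts (contract B u v)"
        using v uv by (auto simp: contract_def merge_def)
    next
      fix z assume "z \<in> f -` {y} \<inter> verts (contract B u v)"
      then have "z \<in> f -` {y} \<inter> verts B" "merge u v z = z" by (auto simp: contract_def)
      then show "z \<in> merge u v ` (f -` {y} \<inter> verts B)" by (metis imageI)
    qed
    ultimately show "set_connected (contract B u v) (f -` {y} \<inter> verts (contract B u v))" by simp
  qed
qed

lemma contract_pendant:
  assumes g: "is_graph B" and pendant: "neighbours B u = {v}"
  shows "contract B u v = delete_vertex B u"
proof -
  have u_edge: "b = u \<or> b = v" if "(u, b) \<in> edges B" for b
    using that pendant by (auto simp: neighbours_def)
  have v: "v \<noteq> u" "(v, v) \<in> edges B"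
    using pendant graph_edge_refl[OF g] graph_edgeD2[OF g] by (auto simp: neighbours_def)
  have "edges (contract B u v) = {e \<in> edges B. fst e \<noteq> u \<and> snd e \<noteq> u}"
  proof (intro equalityI subsetI)
    fix e assume "e \<in> edges (contract B u v)"
    then obtain a b where ab: "(a, b) \<in> edges B" "e = (merge u v a, merge u v b)"
      by (auto simp: contract_def)
    have "a = u \<Longrightarrow> b \<in> {u, v}" "b = u \<Longrightarrow> a \<in> {u, v}"
      using ab(1) u_edge graph_edge_sym[OF g ab(1)] by auto
    then show "e \<in> {e \<in> edges B. fst e \<noteq> u \<and> snd e \<noteq> u}"
      using ab v by (cases "a = u"; cases "b = u") (auto simp: merge_def)
  next
    fix e assume "e \<in> {e \<in> edges B. fst e \<noteq> u \<and> snd e \<noteq> u}"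
    then show "e \<in> edges (contract B u v)"
      using map_prod_imageI[of "fst e" "snd e" "edges B" "merge u v" "merge u v"]
      by (simp add: contract_def)
  qed
  then show ?thesis by (simp add: contract_def delete_vertex_def)
qed

lemma add_leaf_contract_pendant:
  "is_graph B \<Longrightarrow> neighbours B u = {v} \<Longrightarrow> add_leaf (contract B u v) v u = B"
  using contract_pendant add_leaf_delete_pendant by metis

lemma edges_contract_order_two:
  assumes g: "is_graph B" and nb: "neighbours B u = {v, w}"
  shows "edges (contract B u v) = {e \<in> edges B. fst e \<noteq> u \<and> snd e \<noteq> u} \<union> {(v, v), (v, w), (w, v)}"
proof (intro equalityI subsetI)
  have ne: "u \<noteq> v" "u \<noteq> w" and uv: "(u, v) \<in> edges B" and uw: "(u, w) \<in> edges B"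
    using nb by (auto simp: neighbours_def)
  have u_edge: "(u, z) \<in> edges B \<Longrightarrow> z \<in> {u, v, w}" "(z, u) \<in> edges B \<Longrightarrow> z \<in> {u, v, w}" for z
    using nb graph_edge_sym[OF g] by (auto simp: neighbours_def)
  fix e
  show "e \<in> edges (contract B u v)"
    if "e \<in> {e \<in> edges B. fst e \<noteq> u \<and> snd e \<noteq> u} \<union> {(v, v), (v, w), (w, v)}"
  proof -
    have img: "(merge u v a, merge u v b) \<in> edges (contract B u v)" if "(a, b) \<in> edges B" for a b
      using that by (simp add: contract_def map_prod_imageI)
    show ?thesis
      using that ne img[of "fst e" "snd e"] img[OF uv] img[OF uw] img[OF graph_edge_sym[OF g uw]] by auto
  qed
  show "e \<in> {e \<in> edges B. fst e \<noteq> u \<and> snd e \<noteq> u} \<union> {(v, v), (v, w), (w, v)}"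
    if e: "e \<in> edges (contract B u v)"
  proof -
    obtain a b where ab: "(a, b) \<in> edges B" "e = (merge u v a, merge u v b)"
      using e by (auto simp: contract_def)
    then show ?thesis using u_edge[of b] u_edge[of a] ne by (cases "a = u"; cases "b = u") (auto simp: merge_def)
  qed
qed

lemma subdivide_contract:
  assumes tree: "is_tree B" and nb: "neighbours B u = {v, w}" "w \<noteq> v"
  shows "subdivide (contract B u v) v w u = B"
proof -
  have g: "is_graph B" using tree by (rule is_tree_graph)
  have ne: "u \<noteq> v" "u \<noteq> w" and uv: "(u, v) \<in> edges B" and uw: "(u, w) \<in> edges B"
    using nb by (auto simp: neighbours_def)
  have u_edge: "(u, z) \<in> edges B \<longleftrightarrow> z \<in> {u, v, w}" "(z, u) \<in> edges B \<longleftrightarrow> z \<in> {u, v, w}" for z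
    using nb graph_edge_refl[OF g graph_edgeD1[OF g uv]] uv uw graph_edge_sym[OF g]
    by (auto simp: neighbours_def)
  \<comment> \<open>the contracted edge from v to w is new, as a tree has no triangles\<close>
  have no_vw: "(v, w) \<notin> edges B" "(w, v) \<notin> edges B"
    using tree_no_triangle[OF tree uv _ uw ne(1) nb(2)[symmetric] ne(2)] graph_edge_sym[OF g] by blast+
  have vv: "(v, v) \<in> edges B" using graph_edge_refl[OF g graph_edgeD2[OF g uv]] .
  have "edges (subdivide (contract B u v) v w u) = edges B"
  proof (intro set_eqI)
    fix e :: "'a \<times> 'a"
    obtain a b where e: "e = (a, b)" by (cases e)
    show "e \<in> edges (subdivide (contract B u v) v w u) \<longleftrightarrow> e \<in> edges B"
      unfolding e subdivide_def edges_pair edges_contract_order_two[OF g nb(1)]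
      using u_edge[of b] u_edge[of a] no_vw vv ne nb(2) by auto
  qed
  moreover have "insert u (verts B - {u}) = verts B" using graph_edgeD1[OF g uv] by auto
  ultimately show ?thesis by (simp add: subdivide_def contract_def verts_def edges_def)
qed

lemma monotone_epi_edge_between_fibres_unique:
  assumes tree: "is_tree B" and f: "monotone_epi f B A"
    and e: "(w, z) \<in> edges B" "(w', z') \<in> edges B" and eq: "f w = f w'" "f z = f z'"
    and ne: "f w \<noteq> f z"
  shows "w = w' \<and> z = z'"
proof -
  have g: "is_graph B" using tree by (rule is_tree_graph)
  have ep: "graph_epi f B A" using f by (rule monotone_epi_graph_epi)
  have V: "w \<in> verts B" "z \<in> verts B" "w' \<in> verts B" "z' \<in> verts B"
    using e graph_edgeD1[OF g] graph_edgeD2[OF g] by blast+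
  show ?thesis
  proof (rule tree_unique_edge_between[OF tree _ _ _ _ _ _ _ _ _ e])
    show "set_connected B (f -` {f w} \<inter> verts B)" "set_connected B (f -` {f z} \<inter> verts B)"
      using monotone_epi_fibre[OF f graph_epi_vert[OF ep]] V by blast+
  qed (use V eq ne in auto)
qed

lemma monotone_epi_collapse_leaf:
  assumes "is_graph G" "x \<in> verts G" "y \<notin> verts G"
  shows "monotone_epi (merge y x) (add_leaf G x y) G"
proof -
  have "(y, x) \<in> edges (add_leaf G x y)" "y \<noteq> x" using assms(2,3) by (auto simp: add_leaf_def)
  then show ?thesis
    using monotone_epi_merge[OF is_graph_add_leaf[OF assms(1,2)]] contract_add_leaf_leaf[OF assms] by metis
qed

lemma monotone_epi_collapse_subdivision:
  assumes "is_graph G" "(s, t) \<in> edges G" "s \<noteq> t" "m \<notin> verts G"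
  shows "monotone_epi (merge m s) (subdivide G s t m) G"
proof -
  have "(m, s) \<in> edges (subdivide G s t m)" "m \<noteq> s"
    using assms(4) graph_edgeD1[OF assms(1,2)] by (auto simp: subdivide_def)
  then show ?thesis
    using monotone_epi_merge[OF is_graph_subdivide[OF assms(1-3)]] contract_subdivide[OF assms] by metis
qed

lemma in_TM3_edge_at:
  assumes T: "in_TM3 T" and s: "s \<in> verts T"
  shows "\<exists>t. (s, t) \<in> edges T \<and> s \<noteq> t"
proof -
  note TD = in_TM3D[OF T]
  obtain b where "b \<in> verts T" "b \<noteq> s"
    using TD(4) s by (metis card_le_Suc0_iff_eq[OF TD(3)] not_less_eq_eq numeral_2_eq_2)
  then show ?thesis using set_connected_neighbour[OF set_connected_tree_verts[OF TD(1)] s] by metis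
qed

lemma lift_pendant:
  fixes B :: "'b graph" and Z' :: "nat graph"
  assumes g: "is_graph B" and pendant: "neighbours B u = {v}"
    and Z': "in_TM3 Z'" and p': "monotone_epi p' Z' (contract B u v)"
  shows "\<exists>(Z :: nat graph) p q. in_TM3 Z \<and> monotone_epi p Z B \<and> monotone_epi q Z Z'
           \<and> (\<forall>x\<in>verts Z. merge u v (p x) = p' (q x))"
proof -
  note Z'D = in_TM3D[OF Z']
  have ep: "graph_epi p' Z' (contract B u v)" using p' by (rule monotone_epi_graph_epi)
  have uv: "(u, v) \<in> edges B" "u \<noteq> v" using pendant by (auto simp: neighbours_def)
  have "v \<in> verts (contract B u v)" using graph_edgeD2[OF g uv(1)] uv(2) by (simp add: contract_def)
  then obtain s where s: "s \<in> verts Z'" "p' s = v" using graph_epi_verts[OF ep] by (metis imageE)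
  obtain t where st: "(s, t) \<in> edges Z'" "s \<noteq> t" using in_TM3_edge_at[OF Z' s(1)] by blast
  obtain m where m: "m \<notin> verts Z'" using ex_new_if_finite[OF infinite_UNIV_nat Z'D(3)] by blast
  obtain n where n: "n \<notin> insert m (verts Z')"
    using ex_new_if_finite[OF infinite_UNIV_nat] Z'D(3) by (metis finite_insert)
  let ?S = "subdivide Z' s t m"
  let ?p = "(\<lambda>x. p' (merge m s x))(n := u)" and ?q = "\<lambda>x. merge m s (merge n m x)"
  have collapse: "monotone_epi (merge m s) ?S Z'"
    by (rule monotone_epi_collapse_subdivision[OF Z'D(2) st m])
  have gS: "is_graph ?S" using is_graph_subdivide[OF Z'D(2) st] .
  have mn: "m \<in> verts ?S" "n \<notin> verts ?S" using n by (auto simp: subdivide_def)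
  have "monotone_epi ?p (add_leaf ?S m n) (add_leaf (contract B u v) (p' (merge m s m)) u)"
    by (rule monotone_epi_add_leaf[OF gS monotone_epi_comp[OF collapse p'] mn])
      (simp add: contract_def)
  then have p: "monotone_epi ?p (add_leaf ?S m n) B"
    using add_leaf_contract_pendant[OF g pendant] s(2) by simp
  have q: "monotone_epi ?q (add_leaf ?S m n) Z'"
    by (rule monotone_epi_comp[OF monotone_epi_collapse_leaf[OF gS mn] collapse])
  have "merge u v (?p x) = p' (?q x)" if x: "x \<in> verts (add_leaf ?S m n)" for x
  proof -
    consider "x = n" | "x = m" | "x \<in> verts Z'" "x \<noteq> m" "x \<noteq> n"
      using x by (auto simp: add_leaf_def subdivide_def)
    then show ?thesis
    proof cases
      case 3
      then have "p' x \<noteq> u" using graph_epi_vert[OF ep] by (auto simp: contract_def)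
      then show ?thesis using 3 by simp
    qed (use s(2) uv(2) n in auto)
  qed
  moreover have "in_TM3 (add_leaf ?S m n)"
    using in_TM3_add_leaf_subdivide[OF Z' st m] n by simp
  ultimately show ?thesis using p q by blast
qed

lemma lift_order_two:
  fixes B :: "'b graph" and Z' :: "nat graph"
  assumes tree: "is_tree B" and nb: "neighbours B u = {v, w}" "w \<noteq> v"
    and Z': "in_TM3 Z'" and p': "monotone_epi p' Z' (contract B u v)"
  shows "\<exists>(Z :: nat graph) p q. in_TM3 Z \<and> monotone_epi p Z B \<and> monotone_epi q Z Z'
           \<and> (\<forall>x\<in>verts Z. merge u v (p x) = p' (q x))"
proof -
  note Z'D = in_TM3D[OF Z']
  have g: "is_graph B" using tree by (rule is_tree_graph)
  have ep: "graph_epi p' Z' (contract B u v)" using p' by (rule monotone_epi_graph_epi)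
  have uw: "(u, w) \<in> edges B" "u \<noteq> v" "u \<noteq> w" using nb by (auto simp: neighbours_def)
  have "(v, w) \<in> edges (contract B u v)"
    using map_prod_imageI[OF uw(1), of "merge u v" "merge u v"] uw by (simp add: contract_def)
  then obtain s t where st: "(s, t) \<in> edges Z'" "p' s = v" "p' t = w"
    using graph_epi_edge_surj[OF ep] by blast
  have unique: "a = s \<and> b = t" if "(a, b) \<in> edges Z'" "p' a = p' s" "p' b = p' t" for a b
    using monotone_epi_edge_between_fibres_unique[OF Z'D(1) p' that(1) st(1)] that(2,3) st(2,3) nb(2)
    by simp
  obtain m where m: "m \<notin> verts Z'" using ex_new_if_finite[OF infinite_UNIV_nat Z'D(3)] by blast
  have "u \<notin> verts (contract B u v)" by (simp add: contract_def)
  then have "monotone_epi (p'(m := u)) (subdivide Z' s t m) (subdivide (contract B u v) v w u)"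
    using monotone_epi_subdivide[OF Z'D(2) p' st(1) _ m _ unique] st(2,3) nb(2) by simp
  then have p: "monotone_epi (p'(m := u)) (subdivide Z' s t m) B"
    using subdivide_contract[OF tree nb] by simp
  have "s \<noteq> t" using st nb(2) by auto
  have q: "monotone_epi (merge m s) (subdivide Z' s t m) Z'"
    by (rule monotone_epi_collapse_subdivision[OF Z'D(2) st(1) \<open>s \<noteq> t\<close> m])
  have "merge u v ((p'(m := u)) x) = p' (merge m s x)" if "x \<in> verts (subdivide Z' s t m)" for x
  proof (cases "x = m")
    case False
    then have "p' x \<noteq> u" using that graph_epi_vert[OF ep] by (auto simp: contract_def subdivide_def)
    then show ?thesis using False by simp
  qed (use st(2) in simp)
  moreover have "in_TM3 (subdivide Z' s t m)" by (rule in_TM3_subdivide[OF Z' st(1) \<open>s \<noteq> t\<close> m])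
  ultimately show ?thesis using p q by blast
qed

lemma card_fibre_boundary_le:
  assumes tree: "is_tree B" and f: "monotone_epi f B A" and A: "is_graph A" "finite (verts A)"
  shows "card {(w, z) \<in> edges B. f w = a \<and> f z \<noteq> a} \<le> vorder A a"
proof -
  let ?D = "{(w, z) \<in> edges B. f w = a \<and> f z \<noteq> a}"
  have ep: "graph_epi f B A" using f by (rule monotone_epi_graph_epi)
  \<comment> \<open>two edges leaving the fibre towards the same fibre coincide\<close>
  have "inj_on (\<lambda>(w, z). f z) ?D"
    using monotone_epi_edge_between_fibres_unique[OF tree f] by (auto intro!: inj_onI)
  moreover have "(\<lambda>(w, z). f z) ` ?D \<subseteq> neighbours A a"
    using graph_epi_edge[OF ep] by (auto simp: neighbours_def)
  ultimately show ?thesis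
    unfolding vorder_neighbours using card_inj_on_le finite_neighbours[OF A] by blast
qed

lemma collapsed_edge_of_low_order:
  assumes tree: "is_tree B" and A: "in_TM3 A" and f: "monotone_epi f B A"
    and xy: "x \<in> verts B" "y \<in> verts B" "x \<noteq> y" "f x = f y"
  shows "\<exists>u v. (u, v) \<in> edges B \<and> u \<noteq> v \<and> f u = f v \<and> vorder B u \<le> 2"
proof -
  have g: "is_graph B" and finB: "finite (verts B)" using tree by (simp_all add: is_tree_graph is_tree_finite)
  have ep: "graph_epi f B A" using f by (rule monotone_epi_graph_epi)
  note AD = in_TM3D[OF A]
  define F where "F = f -` {f x} \<inter> verts B"
  have F: "F \<subseteq> verts B" "set_connected B F" "x \<in> F" "y \<in> F"
    using monotone_epi_fibre[OF f graph_epi_vert[OF ep xy(1)]] xy unfolding F_def by auto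
  obtain w1 v1 w2 v2 where ends: "w1 \<noteq> w2" "w1 \<in> F" "w2 \<in> F"
    "neighbours B w1 \<inter> F = {v1}" "neighbours B w2 \<inter> F = {v2}"
    using connected_set_two_ends[OF tree F(1,2,3,4) xy(3)] by blast
  define out where "out w = neighbours B w - F" for w
  have fin_out: "finite (out w)" for w
    using finite_neighbours[OF g finB] by (simp add: out_def)
  have order: "vorder B w = Suc (card (out w))" if "neighbours B w \<inter> F = {v}" for w v
  proof -
    have "neighbours B w = insert v (out w)" "v \<notin> out w" using that by (auto simp: out_def)
    then show ?thesis using fin_out by (simp add: vorder_neighbours)
  qed
  let ?D = "{(w, z) \<in> edges B. f w = f x \<and> f z \<noteq> f x}"
  have "{w1} \<times> out w1 \<union> {w2} \<times> out w2 \<subseteq> ?D"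
    using ends(2,3) graph_edgeD2[OF g] by (auto simp: out_def F_def neighbours_def)
  moreover have "finite ?D"
    by (rule finite_subset[OF _ finite_cartesian_product[OF finB finB]]) (auto dest: graph_edgeD1[OF g] graph_edgeD2[OF g])
  ultimately have "card ({w1} \<times> out w1 \<union> {w2} \<times> out w2) \<le> card ?D" by (rule card_mono[rotated])
  also have "\<dots> \<le> vorder A (f x)" by (rule card_fibre_boundary_le[OF tree f AD(2,3)])
  finally have "card ({w1} \<times> out w1 \<union> {w2} \<times> out w2) \<le> vorder A (f x)" .
  moreover have "card ({w1} \<times> out w1 \<union> {w2} \<times> out w2) = card (out w1) + card (out w2)"
    using ends(1) fin_out by (subst card_Un_disjoint) (auto simp: card_cartesian_product_singleton)
  moreover have "vorder A (f x) \<le> 3" using AD(5)[OF graph_epi_vert[OF ep xy(1)]] .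
  ultimately have "card (out w1) \<le> 1 \<or> card (out w2) \<le> 1" by linarith
  moreover have "(w, v) \<in> edges B \<and> w \<noteq> v \<and> f w = f v" if w: "w \<in> F" "neighbours B w \<inter> F = {v}" for w v
  proof -
    have "v \<in> neighbours B w" "v \<in> F" using w(2) by blast+
    then show ?thesis using w(1) by (auto simp: neighbours_def F_def)
  qed
  ultimately show ?thesis using ends order by (metis Suc_le_mono numeral_2_eq_2 one_add_one plus_1_eq_Suc)
qed

lemma lift_through_contraction:
  fixes B :: "'b graph" and Z' :: "nat graph"
  assumes tree: "is_tree B" and uv: "(u, v) \<in> edges B" "u \<noteq> v" and order: "vorder B u \<le> 2"
    and Z': "in_TM3 Z'" and p': "monotone_epi p' Z' (contract B u v)"
  shows "\<exists>(Z :: nat graph) p q. in_TM3 Z \<and> monotone_epi p Z B \<and> monotone_epi q Z Z'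
           \<and> (\<forall>x\<in>verts Z. merge u v (p x) = p' (q x))"
proof -
  let ?N = "neighbours B u"
  have fin: "finite ?N" using finite_neighbours[OF is_tree_graph[OF tree] is_tree_finite[OF tree]] .
  have v: "v \<in> ?N" using uv by (simp add: neighbours_def)
  have "card (?N - {v}) \<le> Suc 0" using order v fin by (simp add: vorder_neighbours card_Diff_singleton)
  then have single: "a = b" if "a \<in> ?N - {v}" "b \<in> ?N - {v}" for a b
    using that card_le_Suc0_iff_eq[of "?N - {v}"] fin by blast
  consider "?N = {v}" | w where "w \<noteq> v" "?N = {v, w}"
  proof (cases "?N - {v} = {}")
    case True
    then show ?thesis using that(1) v by blast
  next
    case False
    then obtain w where w: "w \<in> ?N - {v}" by blast
    then have "?N = {v, w}" using single[OF w] v by blast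
    then show ?thesis using that(2) w by blast
  qed
  then show ?thesis
  proof cases
    case 1
    then show ?thesis using lift_pendant[OF is_tree_graph[OF tree] _ Z' p'] by blast
  next
    case 2
    then show ?thesis using lift_order_two[OF tree _ _ Z' p'] by blast
  qed
qed


lemma graph_epi_rename:
  assumes "is_graph C"
  shows "graph_epi f C (f ` verts C, map_prod f f ` edges C)"
  by (rule graph_epiI) auto

lemma monotone_epi_inv_into:
  assumes gA: "is_graph A" and gB: "is_graph B" and f: "graph_epi f B A" and inj: "inj_on f (verts B)"
  shows "monotone_epi (inv_into (verts B) f) A B"
proof (rule monotone_epi_inj[OF gA])
  have vA: "verts A = f ` verts B" using graph_epi_verts[OF f] by simp
  have inv: "inv_into (verts B) f (f a) = a" if "a \<in> verts B" for a using inv_into_f_f[OF inj that] .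
  show "graph_epi (inv_into (verts B) f) A B"
  proof (rule graph_epiI)
    show "inv_into (verts B) f ` verts A = verts B" unfolding vA using inv_into_image_cancel[OF inj] by simp
    show "(inv_into (verts B) f c, inv_into (verts B) f d) \<in> edges B" if "(c, d) \<in> edges A" for c d
    proof -
      obtain a b where "(a, b) \<in> edges B" "f a = c" "f b = d" using graph_epi_edge_surj[OF f \<open>(c, d) \<in> edges A\<close>] by blast
      then show ?thesis using inv graph_edgeD1[OF gB] graph_edgeD2[OF gB] by auto
    qed
    show "\<exists>c d. (c, d) \<in> edges A \<and> inv_into (verts B) f c = a \<and> inv_into (verts B) f d = b"
      if ab: "(a, b) \<in> edges B" for a b
      using graph_epi_edge[OF f ab] inv graph_edgeD1[OF gB ab] graph_edgeD2[OF gB ab] by blast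
  qed
  show "inj_on (inv_into (verts B) f) (verts A)" unfolding vA by (simp add: inj_on_inv_into)
qed


lemma in_TM3_rename:
  assumes C: "in_TM3 C" and inj: "inj_on f (verts C)"
  shows "in_TM3 (f ` verts C, map_prod f f ` edges C)" (is "in_TM3 ?D")
proof -
  note CD = in_TM3D[OF C]
  have eq: "f a = f b \<longleftrightarrow> a = b" if "a \<in> verts C" "b \<in> verts C" for a b
    using inj that by (auto dest: inj_onD)
  have "neighbours ?D (f c) = f ` neighbours C c" if c: "c \<in> verts C" for c
  proof (intro equalityI subsetI)
    fix y assume "y \<in> neighbours ?D (f c)"
    then obtain a b where ab: "(a, b) \<in> edges C" "f a = f c" "y = f b" "f b \<noteq> f c"
      by (auto simp: neighbours_def)
    then have "a = c" "b \<noteq> c" using eq c graph_edgeD1[OF CD(2) ab(1)] by auto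
    then show "y \<in> f ` neighbours C c" using ab by (auto simp: neighbours_def)
  next
    fix y assume "y \<in> f ` neighbours C c"
    then obtain b where b: "(c, b) \<in> edges C" "b \<noteq> c" "y = f b" by (auto simp: neighbours_def)
    then have "f b \<noteq> f c" using eq c graph_edgeD2[OF CD(2) b(1)] by auto
    then show "y \<in> neighbours ?D (f c)" using b by (auto simp: neighbours_def)
  qed
  moreover have "card (f ` neighbours C c) = card (neighbours C c)" for c
    using graph_edgeD2[OF CD(2)]
    by (intro card_image inj_on_subset[OF inj]) (auto simp: neighbours_def)
  ultimately have "vorder ?D (f c) \<le> 3" if "c \<in> verts C" for c
    using that CD(5) by (simp add: vorder_neighbours)
  then show ?thesis
    using is_tree_rename[OF CD(1) inj] CD(4) card_image[OF inj] by (auto simp: in_TM3_def)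
qed

lemma in_TM3_nat_copy:
  fixes C :: "'c graph"
  assumes C: "in_TM3 C"
  shows "\<exists>(D :: nat graph) h. in_TM3 D \<and> monotone_epi h D C"
proof -
  note CD = in_TM3D[OF C]
  obtain enc :: "'c \<Rightarrow> nat" where enc: "inj_on enc (verts C)"
    using finite_imp_inj_to_nat_seg[OF CD(3)] by blast
  let ?D = "(enc ` verts C, map_prod enc enc ` edges C)"
  have "in_TM3 ?D" using in_TM3_rename[OF C enc] .
  moreover have "monotone_epi (inv_into (verts C) enc) ?D C"
    using monotone_epi_inv_into[OF in_TM3D(2)[OF calculation] CD(2) graph_epi_rename[OF CD(2)] enc] .
  ultimately show ?thesis by blast
qed

lemma amalgamation_injective:
  fixes A :: "'a graph" and B :: "'b graph" and C :: "'c graph"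
  assumes A: "is_graph A" and B: "is_graph B" and C: "in_TM3 C"
    and f: "monotone_epi f B A" and inj: "inj_on f (verts B)" and g: "monotone_epi g C A"
  shows "\<exists>(D :: nat graph) f0 g0. in_TM3 D \<and> monotone_epi f0 D B \<and> monotone_epi g0 D C
           \<and> (\<forall>x\<in>verts D. f (f0 x) = g (g0 x))"
proof -
  let ?f' = "inv_into (verts B) f"
  have ep: "graph_epi f B A" using f by (rule monotone_epi_graph_epi)
  have f': "monotone_epi ?f' A B" using monotone_epi_inv_into[OF A B ep inj] .
  obtain D :: "nat graph" and h where D: "in_TM3 D" "monotone_epi h D C"
    using in_TM3_nat_copy[OF C] by blast
  have gh: "monotone_epi (\<lambda>x. g (h x)) D A" using monotone_epi_comp[OF D(2) g] .
  have "f (?f' (g (h x))) = g (h x)" if "x \<in> verts D" for x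
    using graph_epi_vert[OF monotone_epi_graph_epi[OF gh] that] graph_epi_verts[OF ep]
    by (auto intro: f_inv_into_f)
  then show ?thesis using D monotone_epi_comp[OF gh f'] by blast
qed

lemma amalgamation:
  fixes A :: "'a graph" and B :: "'b graph" and C :: "'c graph"
  assumes A: "in_TM3 A" and C: "in_TM3 C" and g: "monotone_epi g C A"
    and B: "is_tree B" and f: "monotone_epi f B A"
  shows "\<exists>(D :: nat graph) f0 g0. in_TM3 D \<and> monotone_epi f0 D B \<and> monotone_epi g0 D C
           \<and> (\<forall>x\<in>verts D. f (f0 x) = g (g0 x))"
  using B f
proof (induction "card (verts B)" arbitrary: B f rule: less_induct)
  case less
  note tree = less.prems(1) and f = less.prems(2)
  show ?case
  proof (cases "inj_on f (verts B)")
    case True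
    then show ?thesis
      using amalgamation_injective[OF in_TM3D(2)[OF A] is_tree_graph[OF tree] C f _ g] by blast
  next
    case False
    then obtain x y where "x \<in> verts B" "y \<in> verts B" "x \<noteq> y" "f x = f y"
      unfolding inj_on_def by blast
    then obtain u v where uv: "(u, v) \<in> edges B" "u \<noteq> v" "f u = f v" "vorder B u \<le> 2"
      using collapsed_edge_of_low_order[OF tree A f] by blast
    have u: "u \<in> verts B" and v: "v \<in> verts B"
      using uv(1) is_tree_graph[OF tree] by (auto dest: graph_edgeD1 graph_edgeD2)
    have "card (verts (contract B u v)) < card (verts B)"
      using card_Diff1_less[OF is_tree_finite[OF tree] u] by (simp add: contract_def)
    then obtain D1 :: "nat graph" and f1 g1 where D1: "in_TM3 D1" "monotone_epi f1 D1 (contract B u v)"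
      "monotone_epi g1 D1 C" "\<forall>x\<in>verts D1. f (f1 x) = g (g1 x)"
      using less.hyps is_tree_contract[OF tree uv(1,2)]
        monotone_epi_contract[OF is_tree_graph[OF tree] f v uv(2,3)] by blast
    obtain Z :: "nat graph" and p q where Z: "in_TM3 Z" "monotone_epi p Z B" "monotone_epi q Z D1"
      "\<forall>x\<in>verts Z. merge u v (p x) = f1 (q x)"
      using lift_through_contraction[OF tree uv(1,2,4) D1(1,2)] by blast
    have "f (p x) = g (g1 (q x))" if "x \<in> verts Z" for x
    proof -
      have "f (p x) = f (merge u v (p x))" using uv(3) by (simp add: merge_def)
      also have "\<dots> = f (f1 (q x))" using Z(4) that by simp
      also have "\<dots> = g (g1 (q x))" using D1(4) graph_epi_vert[OF monotone_epi_graph_epi[OF Z(3)] that] by simp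
      finally show ?thesis .
    qed
    then show ?thesis using Z(1,2) monotone_epi_comp[OF Z(3) D1(3)] by blast
  qed
qed

definition edge_graph :: "bool graph" where
  "edge_graph = ({True, False}, UNIV)"

lemma in_TM3_edge_graph: "in_TM3 edge_graph"
proof -
  have "edge_graph = add_leaf ({False}, {(False, False)}) False True"
    by (auto simp: edge_graph_def add_leaf_def)
  then have "is_tree edge_graph" using is_tree_add_leaf[OF is_tree_singleton, of False False True] by simp
  moreover have "vorder edge_graph a \<le> 3" for a
    using card_mono[of "UNIV :: bool set" "neighbours edge_graph a"] by (simp add: vorder_neighbours)
  ultimately show ?thesis by (simp add: in_TM3_def edge_graph_def)
qed

lemma monotone_epi_pendant_indicator:
  assumes tree: "is_tree B" and pendant: "neighbours B l = {x}"
  shows "monotone_epi (\<lambda>z. z = l) B edge_graph"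
proof -
  have g: "is_graph B" using tree by (rule is_tree_graph)
  have "x \<in> neighbours B l" using pendant by simp
  then have lx: "(l, x) \<in> edges B" "l \<noteq> x" by (auto simp: neighbours_def)
  have l: "l \<in> verts B" and x: "x \<in> verts B" using graph_edgeD1[OF g lx(1)] graph_edgeD2[OF g lx(1)] .
  have epi: "graph_epi (\<lambda>z. z = l) B edge_graph"
  proof (rule graph_epiI)
    show "(\<lambda>z. z = l) ` verts B = verts edge_graph"
      using l x lx(2) by (auto simp: edge_graph_def image_iff)
    show "\<exists>a b. (a, b) \<in> edges B \<and> (a = l) = c \<and> (b = l) = d" for c d
      using lx graph_edge_refl[OF g l] graph_edge_refl[OF g x] graph_edge_sym[OF g lx(1)]
      by (cases c; cases d) auto
  qed (simp add: edge_graph_def)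
  show ?thesis
  proof (rule monotone_epiI_fibres[OF g epi])
    fix c :: bool
    show "set_connected B ((\<lambda>z. z = l) -` {c} \<inter> verts B)"
    proof (cases c)
      case True
      then have "(\<lambda>z. z = l) -` {c} \<inter> verts B = {l}" using l by auto
      then show ?thesis by (simp add: set_connected_singleton)
    next
      case False
      have "set_connected (delete_vertex B l) (verts (delete_vertex B l))"
        using set_connected_tree_verts[OF is_tree_delete_pendant[OF tree]] pendant by blast
      then have "set_connected B (verts B - {l})"
        using set_connected_mono_edges[of "delete_vertex B l" _ B] by (simp add: delete_vertex_def)
      moreover have "(\<lambda>z. z = l) -` {c} \<inter> verts B = verts B - {l}" using False by auto
      ultimately show ?thesis by simp
    qed
  qed
qed

lemma monotone_epi_onto_edge_graph:
  assumes B: "in_TM3 B"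
  shows "\<exists>\<chi>. monotone_epi \<chi> B edge_graph"
proof -
  note BD = in_TM3D[OF B]
  obtain p q where "p \<in> verts B" "q \<in> verts B" "p \<noteq> q"
    using BD(3,4) card_le_Suc0_iff_eq[OF BD(3)] by (metis not_less_eq_eq numeral_2_eq_2)
  then obtain l x where "neighbours B l = {x}" using tree_pendant_exists[OF BD(1)] by blast
  then show ?thesis using monotone_epi_pendant_indicator[OF BD(1)] by blast
qed

theorem theorem3p13:
  shows "(\<forall>(B :: 'b graph) (C :: 'c graph). in_TM3 B \<and> in_TM3 C \<longrightarrow>
            (\<exists>(D :: nat graph) p q. in_TM3 D \<and> monotone_epi p D B \<and> monotone_epi q D C))
       \<and> (\<forall>(A :: 'a graph) (B :: 'b graph) (C :: 'c graph) f g.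
            in_TM3 A \<and> in_TM3 B \<and> in_TM3 C \<and> monotone_epi f B A \<and> monotone_epi g C A \<longrightarrow>
            (\<exists>(D :: nat graph) f0 g0. in_TM3 D \<and> monotone_epi f0 D B \<and> monotone_epi g0 D C
               \<and> (\<forall>x\<in>verts D. f (f0 x) = g (g0 x))))"
proof (intro conjI allI impI)
  fix B :: "'b graph" and C :: "'c graph"
  assume BC: "in_TM3 B \<and> in_TM3 C"
  obtain \<chi>B \<chi>C where "monotone_epi \<chi>B B edge_graph" "monotone_epi \<chi>C C edge_graph"
    using monotone_epi_onto_edge_graph BC by meson
  then show "\<exists>(D :: nat graph) p q. in_TM3 D \<and> monotone_epi p D B \<and> monotone_epi q D C"
    using amalgamation[OF in_TM3_edge_graph _ _ in_TM3D(1)] BC by blast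
next
  fix A :: "'a graph" and B :: "'b graph" and C :: "'c graph" and f g
  assume "in_TM3 A \<and> in_TM3 B \<and> in_TM3 C \<and> monotone_epi f B A \<and> monotone_epi g C A"
  then show "\<exists>(D :: nat graph) f0 g0. in_TM3 D \<and> monotone_epi f0 D B \<and> monotone_epi g0 D C
               \<and> (\<forall>x\<in>verts D. f (f0 x) = g (g0 x))"
    using amalgamation[OF _ _ _ in_TM3D(1)] by blast
qed
end
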